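(* Let $\{(\mathcal{T}^h,\Sigma^h)\}_{h>0}$ be non-degenerate tessellations of $\Omega$ satisfying the orthogonality assumption, let $V$ be as below and let $W$ satisfy the (Pointy) assumption. Let $\{\rho^h\in\mathcal{P}(\mathcal{T}^h)\}_{h>0}$ be such that $\mathrm{d}\hat\rho^h/\mathrm{d}\mathcal{L}^d\to\mathrm{d}\rho/\mathrm{d}\mathcal{L}^d$ in $L^1(\Omega)$ and $\sup_{h>0}\int_\Omega\phi(\mathrm{d}\hat\rho^h/\mathrm{d}\mathcal{L}^d)\,\mathrm{d}\mathcal{L}^d<\infty$, where $\phi(s)=s\log s-s+1$. Then, with $o(h)$ uniform over $(K,L)\in\Sigma^h$, \[ q_{K|L}=\nabla\mathsf{Q}(\hat\rho^h)(x_{KL})\cdot(x_L-x_K)+o(h)\quad\text{for any }x_{KL}\in K\cup L, \] and moreover \[ q_{K|L}=\frac1{|K|}\int_K\nabla\mathsf{Q}(\hat\rho^h)(x)\,\mathrm{d}x\cdot(x_L-x_K)+o(h),\qquad q_{K|L}=\frac1{|(K|L)|}\int_{(K|L)}\nabla\mathsf{Q}(\hat\rho^h)\,\mathrm{d}\mathcal{H}^{d-1}\cdot(x_L-x_K)+o(h). \]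
   Context: $\Omega\subset\mathbb{R}^d$ open bounded convex. Tessellation $(\mathcal{T}^h,\Sigma^h)$: mutually disjoint open convex cells covering $\Omega$; $\Sigma^h$ the ordered pairs of cells whose closures share a face $(K|L)$ of positive $\mathcal{H}^{d-1}$-measure; $h=\max\mathrm{diam}K$; $x_K$ barycenter. Non-degenerate: some $\zeta\in(0,1)$ independent of $h$ with $B(x_K,\zeta h)\subset K$ and $|(K|L)|\ge\zeta h^{d-1}$. Orthogonality: $(K|L)\perp(x_L-x_K)$. $V\in\mathrm{Lip}(\mathbb{R}^d)\cap C^1(\mathbb{R}^d)$ bounded below; $W\ge0$, $W(x)=W(-x)$, (Pointy): $W\in\mathrm{Lip}(\mathbb{R}^d)\cap C^1(\mathbb{R}^d\setminus\{0\})$. $V_K=V(x_K)$, $W_{KL}=W(x_L-x_K)$, $q_{K|L}=V_L-V_K+\sum_M\rho^h_M(W_{ML}-W_{MK})$. $\mathrm{d}\hat\rho^h/\mathrm{d}\mathcal{L}^d=\sum_K\frac{\rho^h_K}{|K|}\mathbb{1}_K$; $\mathsf{Q}(\rho)=V+W*\rho$. *)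

theory Defs
  imports "HOL-Analysis.Analysis"
begin

definition grad :: "('a::euclidean_space \<Rightarrow> real) \<Rightarrow> 'a \<Rightarrow> 'a" where
  "grad f x = (\<Sum>b\<in>Basis. frechet_derivative f (at x) b *\<^sub>R b)"

definition haus_alpha :: "nat \<Rightarrow> real" where
  "haus_alpha s = pi powr (real s / 2) / Gamma (real s / 2 + 1)"

definition haus_cost :: "nat \<Rightarrow> 'a::metric_space set \<Rightarrow> real" where
  "haus_cost s C = (if C = {} then 0 else haus_alpha s * (diameter C / 2) ^ s)"

definition hausdorff_outer :: "nat \<Rightarrow> 'a::metric_space set \<Rightarrow> ennreal" where
  "hausdorff_outer s A =
     (SUP \<delta>\<in>{0<..}. INF C\<in>{C :: nat \<Rightarrow> 'a set. A \<subseteq> (\<Union>i. C i) \<and>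
                                  (\<forall>i. bounded (C i) \<and> diameter (C i) \<le> \<delta>)}.
                      (\<Sum>i. ennreal (haus_cost s (C i))))"

definition hausdorff_measure :: "nat \<Rightarrow> 'a::euclidean_space measure" where
  "hausdorff_measure s = measure_of UNIV (sets borel) (hausdorff_outer s)"

definition bary :: "'a::euclidean_space set \<Rightarrow> 'a" where
  "bary K = (1 / measure lebesgue K) *\<^sub>R set_lebesgue_integral lebesgue K (\<lambda>x. x)"

definition face :: "'a::euclidean_space set \<Rightarrow> 'a set \<Rightarrow> 'a set" where
  "face K L = closure K \<inter> closure L"

definition edges :: "'a::euclidean_space set set \<Rightarrow> ('a set \<times> 'a set) set" where
  "edges T = {(K, L). K \<in> T \<and> L \<in> T \<and> K \<noteq> L \<and>
      emeasure (hausdorff_measure (DIM('a) - 1)) (face K L) > 0}"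

definition tessellation :: "'a::euclidean_space set \<Rightarrow> 'a set set \<Rightarrow> bool" where
  "tessellation \<Omega> T \<longleftrightarrow> finite T \<and> T \<noteq> {} \<and>
     (\<forall>K\<in>T. open K \<and> convex K \<and> K \<noteq> {} \<and> K \<subseteq> \<Omega>) \<and>
     (\<forall>K\<in>T. \<forall>L\<in>T. K \<noteq> L \<longrightarrow> K \<inter> L = {}) \<and>
     \<Omega> \<subseteq> \<Union>(closure ` T)"

definition mesh :: "'a::euclidean_space set set \<Rightarrow> real" where
  "mesh T = Max (diameter ` T)"

definition rhohat :: "'a::euclidean_space set set \<Rightarrow> ('a set \<Rightarrow> real) \<Rightarrow> 'a \<Rightarrow> real" where
  "rhohat T \<rho> x = (\<Sum>K\<in>T. \<rho> K / measure lebesgue K * indicator K x)"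

definition Qpot :: "('a::euclidean_space \<Rightarrow> real) \<Rightarrow> ('a \<Rightarrow> real) \<Rightarrow> ('a \<Rightarrow> real) \<Rightarrow> 'a \<Rightarrow> real" where
  "Qpot V W g x = V x + (\<integral>y. W (x - y) * g y \<partial>lebesgue)"

definition qKL :: "('a::euclidean_space \<Rightarrow> real) \<Rightarrow> ('a \<Rightarrow> real) \<Rightarrow> 'a set set \<Rightarrow>
                  ('a set \<Rightarrow> real) \<Rightarrow> 'a set \<Rightarrow> 'a set \<Rightarrow> real" where
  "qKL V W T \<rho> K L = V (bary L) - V (bary K) +
     (\<Sum>M\<in>T. \<rho> M * (W (bary L - bary M) - W (bary K - bary M)))"

definition phi_ent :: "real \<Rightarrow> real" where
  "phi_ent s = (if s = 0 then 1 else s * ln s - s + 1)"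

end

(*
  On each cell the reconstruction is constant, so
  Q(rhohat) = V + sum_M rho_M / |M| int_M W(. - y) dy. Since grad W is bounded, and continuous away
  from the origin, this is differentiable with the continuous gradient grad V + sum_M rho_M / |M| int_M grad W(. - y) dy.

  Subtracting grad Q(rhohat)(x) . (x_L - x_K) from q_{K|L} leaves a potential part, which is o(h) by
  uniform continuity of grad V on the closure of Omega, and an interaction part. There, cells M
  whose barycentre is at distance at least r from x_K contribute o(h) by uniform continuity of
  grad W away from the origin, while the cells near x_K contribute O(h) times their total mass.
  The entropy bound makes that mass small uniformly in h, because the total mass of the cells
  inside a ball B is at most e^a |B| + C / (a - 1) for every a > 1.

  The estimate is uniform in x on closure K Un closure L, so it passes to averages over K and over
  the face.
*)

theory Submission
  imports Defs
begin

section \<open>Gradients and first-order estimates\<close>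

lemma has_derivative_grad:
  fixes f :: "'a::euclidean_space \<Rightarrow> real"
  assumes "f differentiable (at x)"
  shows "(f has_derivative (\<lambda>u. grad f x \<bullet> u)) (at x)"
proof -
  let ?f' = "frechet_derivative f (at x)"
  have deriv: "(f has_derivative ?f') (at x)"
    using assms frechet_derivative_works by blast
  have "?f' u = grad f x \<bullet> u" for u
  proof -
    have "?f' u = ?f' (\<Sum>b\<in>Basis. (u \<bullet> b) *\<^sub>R b)"
      by (simp add: euclidean_representation)
    also have "\<dots> = (\<Sum>b\<in>Basis. (u \<bullet> b) * ?f' b)"
      using has_derivative_linear[OF deriv] by (simp add: linear_sum linear_scale)
    also have "\<dots> = grad f x \<bullet> u"
      unfolding grad_def by (simp add: inner_sum_right inner_commute mult.commute)
    finally show ?thesis .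
  qed
  then have "?f' = (\<lambda>u. grad f x \<bullet> u)" by auto
  with deriv show ?thesis by simp
qed

lemma grad_eqI:
  fixes f :: "'a::euclidean_space \<Rightarrow> real"
  assumes "(f has_derivative (\<lambda>u. g \<bullet> u)) (at x)"
  shows "grad f x = g"
proof -
  have "grad f x = (\<Sum>b\<in>Basis. (g \<bullet> b) *\<^sub>R b)"
    unfolding grad_def frechet_derivative_at[OF assms, symmetric] by (simp add: inner_commute)
  then show ?thesis
    by (simp add: euclidean_representation)
qed

lemma norm_grad_le_lipschitz:
  fixes f :: "'a::euclidean_space \<Rightarrow> real"
  assumes lip: "L-lipschitz_on UNIV f" and deriv: "(f has_derivative (\<lambda>u. g \<bullet> u)) (at x)"
  shows "norm g \<le> L"
proof (rule ccontr)
  assume "\<not> norm g \<le> L"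
  then have gt: "L < norm g" by simp
  have "0 \<le> L" using lip by (simp add: lipschitz_on_def)
  with gt have g0: "0 < norm g" by linarith
  define e where "e = (norm g - L) / 2"
  have "0 < e" using gt by (simp add: e_def)
  then obtain d where d: "0 < d"
    "\<And>y. norm (y - x) < d \<Longrightarrow> \<bar>f y - f x - g \<bullet> (y - x)\<bar> \<le> e * norm (y - x)"
    using deriv unfolding has_derivative_at_alt by (metis real_norm_def)
  define t where "t = d / (2 * norm g)"
  have t0: "0 < t" using d g0 by (simp add: t_def)
  have "norm (t *\<^sub>R g) < d" using d g0 by (simp add: t_def)
  then have taylor: "\<bar>f (x + t *\<^sub>R g) - f x - t * (norm g * norm g)\<bar> \<le> e * (t * norm g)"
    using d(2)[of "x + t *\<^sub>R g"] t0
    by (simp add: power2_norm_eq_inner[symmetric] power2_eq_square)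
  have "\<bar>f (x + t *\<^sub>R g) - f x\<bar> \<le> L * (t * norm g)"
    using lip t0 unfolding lipschitz_on_def
    by (metis UNIV_I dist_norm dist_real_def add_diff_cancel_left' norm_scaleR abs_of_pos)
  with taylor have "norm g * (t * norm g) \<le> (L + e) * (t * norm g)"
    by (simp add: algebra_simps)
  then have "norm g \<le> L + e" using t0 g0 by (simp add: mult_le_cancel_right)
  then show False using gt by (simp add: e_def field_simps)
qed

lemma differentiable_bound_inner:
  fixes f :: "'a::euclidean_space \<Rightarrow> real"
  assumes deriv: "\<And>p. p \<in> closed_segment a b \<Longrightarrow> (f has_derivative (\<lambda>u. Df p \<bullet> u)) (at p)"
    and bound: "\<And>p. p \<in> closed_segment a b \<Longrightarrow> norm (Df p - c) \<le> B"
  shows "\<bar>f b - f a - c \<bullet> (b - a)\<bar> \<le> B * norm (b - a)"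
proof -
  let ?g = "\<lambda>p. f p - c \<bullet> p"
  have "(?g has_derivative (\<lambda>u. (Df p - c) \<bullet> u)) (at p within closed_segment a b)"
    if "p \<in> closed_segment a b" for p
    using has_derivative_diff[OF deriv[OF that] has_derivative_inner_right[OF has_derivative_ident]]
    by (auto intro: has_derivative_at_withinI simp: inner_diff_left)
  moreover have "onorm (\<lambda>u. (Df p - c) \<bullet> u) \<le> B" if "p \<in> closed_segment a b" for p
  proof (rule onorm_le)
    fix u
    have "norm ((Df p - c) \<bullet> u) \<le> norm (Df p - c) * norm u"
      by (simp add: Cauchy_Schwarz_ineq2)
    also have "\<dots> \<le> B * norm u" using bound[OF that] by (simp add: mult_right_mono)
    finally show "norm ((Df p - c) \<bullet> u) \<le> B * norm u" .
  qed
  ultimately have "norm (?g b - ?g a) \<le> B * norm (b - a)"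
    by (intro differentiable_bound[OF convex_closed_segment]) auto
  then show ?thesis by (simp add: algebra_simps)
qed

lemma uniform_first_order_estimate:
  fixes f :: "'a::euclidean_space \<Rightarrow> real"
  assumes S: "compact S" and diff: "\<forall>p\<in>S. f differentiable (at p)"
    and cont: "continuous_on S (grad f)" and e: "0 < e"
  obtains \<delta> where "0 < \<delta>"
    "\<And>a b x. closed_segment a b \<subseteq> S \<Longrightarrow> x \<in> S \<Longrightarrow> dist a x \<le> \<delta> \<Longrightarrow> dist b a \<le> \<delta> \<Longrightarrow>
       \<bar>f b - f a - grad f x \<bullet> (b - a)\<bar> \<le> e * norm (b - a)"
proof -
  obtain d where d: "0 < d" "\<And>p x. p \<in> S \<Longrightarrow> x \<in> S \<Longrightarrow> dist p x < d \<Longrightarrow> dist (grad f p) (grad f x) < e"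
    using compact_uniformly_continuous[OF cont S] e unfolding uniformly_continuous_on_def by metis
  have "\<bar>f b - f a - grad f x \<bullet> (b - a)\<bar> \<le> e * norm (b - a)"
    if seg: "closed_segment a b \<subseteq> S" and x: "x \<in> S" and ax: "dist a x \<le> d / 3" and ba: "dist b a \<le> d / 3"
    for a b x
  proof (rule differentiable_bound_inner)
    fix p assume p: "p \<in> closed_segment a b"
    then show "(f has_derivative (\<lambda>u. grad f p \<bullet> u)) (at p)"
      using seg diff has_derivative_grad by blast
    have "dist p a \<le> dist b a"
      using dist_in_closed_segment[OF p] by (simp add: dist_commute)
    then have "dist p x < d"
      using dist_triangle[of p x a] ax ba d(1) by linarith
    then show "norm (grad f p - grad f x) \<le> e"
      using d(2)[of p x] p seg x by (auto simp: dist_norm)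
  qed
  with d(1) show thesis
    by (intro that[of "d / 3"]) auto
qed

lemma borel_measurable_lebesgue_of_borel:
  "f \<in> borel_measurable borel \<Longrightarrow> f \<in> borel_measurable lebesgue"
  by (rule measurable_completion) simp

lemma exists_small_factor:
  fixes m c :: real
  assumes "0 \<le> m" "0 < c"
  obtains e where "0 < e" "e * m \<le> c"
proof
  show "0 < c / (m + 1)" using assms by simp
  have "c / (m + 1) * m \<le> c / (m + 1) * (m + 1)"
    using assms by (intro mult_left_mono) auto
  then show "c / (m + 1) * m \<le> c" using assms by simp
qed

lemma measure_ball_uniformly_small:
  assumes "0 \<le> \<Lambda>" "0 < \<eta>"
  obtains s where "0 < s" "\<And>x::'a::euclidean_space. \<Lambda> * measure lebesgue (ball x s) \<le> \<eta>"
proof -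
  define U where "U = measure lborel (ball (0::'a) 1)"
  have U0: "0 \<le> \<Lambda> * U" using assms by (simp add: U_def)
  obtain s0 where s0: "0 < s0" "s0 * (\<Lambda> * U) \<le> \<eta>"
    using exists_small_factor[OF U0 assms(2)] .
  define s where "s = min 1 s0"
  have s: "0 < s" "s \<le> 1" "s \<le> s0" using s0 by (auto simp: s_def)
  have "\<Lambda> * measure lebesgue (ball x s) \<le> \<eta>" for x :: 'a
  proof -
    have "\<Lambda> * measure lebesgue (ball x s) = s ^ DIM('a) * (\<Lambda> * U)"
      using content_ball_conv_unit_ball[of s x] s by (simp add: U_def)
    also have "\<dots> \<le> s0 * (\<Lambda> * U)"
      using power_decreasing[of 1 "DIM('a)" s] s U0 DIM_positive by (intro mult_right_mono) auto
    finally show ?thesis using s0(2) by linarith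
  qed
  with s(1) show thesis by (rule that)
qed

lemma set_integrable_bounded:
  fixes f :: "'x \<Rightarrow> 'b::{banach,second_countable_topology}"
  assumes "A \<in> sets M" "emeasure M A < \<infinity>" "f \<in> borel_measurable M" "\<And>x. x \<in> A \<Longrightarrow> norm (f x) \<le> B"
  shows "set_integrable M A f"
  unfolding set_integrable_def using assms by (intro integrableI_bounded_set_indicator[where B=B]) auto

lemma set_integral_norm_le_measure:
  fixes f :: "'x \<Rightarrow> 'b::{banach,second_countable_topology}"
  assumes A: "A \<in> sets M" "emeasure M A < \<infinity>" and f: "set_integrable M A f"
    and bound: "\<And>x. x \<in> A \<Longrightarrow> norm (f x) \<le> B"
  shows "norm (set_lebesgue_integral M A f) \<le> B * measure M A"
proof -
  have "norm (set_lebesgue_integral M A f) \<le> set_lebesgue_integral M A (\<lambda>x. norm (f x))"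
    by (rule set_integral_norm_bound[OF f])
  also have "\<dots> \<le> set_lebesgue_integral M A (\<lambda>x. B)"
    using A f bound set_integrable_bounded[OF A, of "\<lambda>x. B" "\<bar>B\<bar>"]
    by (intro set_integral_mono) (auto intro: set_integrable_norm)
  also have "\<dots> = B * measure M A"
    using A by (simp add: set_integral_const)
  finally show ?thesis .
qed

lemma set_integral_inner_left:
  fixes G :: "'x \<Rightarrow> 'b::euclidean_space"
  assumes "set_integrable M A G"
  shows "set_integrable M A (\<lambda>x. G x \<bullet> d)"
    and "set_lebesgue_integral M A G \<bullet> d = set_lebesgue_integral M A (\<lambda>x. G x \<bullet> d)"
proof -
  have "integrable M (\<lambda>x. (indicator A x *\<^sub>R G x) \<bullet> d)"
    using assms unfolding set_integrable_def by (rule integrable_inner_left)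
  then show "set_integrable M A (\<lambda>x. G x \<bullet> d)"
    unfolding set_integrable_def by simp
  show "set_lebesgue_integral M A G \<bullet> d = set_lebesgue_integral M A (\<lambda>x. G x \<bullet> d)"
    using assms unfolding set_lebesgue_integral_def set_integrable_def
    by (subst integral_inner_left[symmetric]) auto
qed

lemma average_inner_estimate:
  fixes G :: "'x \<Rightarrow> 'b::euclidean_space"
  assumes A: "A \<in> sets M" and pos: "0 < measure M A" and meas: "G \<in> borel_measurable M"
    and bdd: "bounded (G ` A)" and close: "\<And>x. x \<in> A \<Longrightarrow> \<bar>q - G x \<bullet> d\<bar> \<le> B"
  shows "\<bar>q - ((1 / measure M A) *\<^sub>R set_lebesgue_integral M A G) \<bullet> d\<bar> \<le> B"
proof -
  let ?m = "measure M A"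
  have fin: "emeasure M A < \<infinity>"
    using pos measure_zero_top by (metis less_irrefl top.not_eq_extremum infinity_ennreal_def)
  obtain BG where "\<And>x. x \<in> A \<Longrightarrow> norm (G x) \<le> BG"
    using bdd unfolding bounded_iff by auto
  then have G: "set_integrable M A G"
    by (rule set_integrable_bounded[OF A fin meas])
  have const: "set_integrable M A (\<lambda>x. q)"
    using A fin by (intro set_integrable_bounded[where B="\<bar>q\<bar>"]) auto
  note Gd = set_integral_inner_left[OF G, of d]
  have "set_lebesgue_integral M A (\<lambda>x. q - G x \<bullet> d) = ?m * q - set_lebesgue_integral M A G \<bullet> d"
    using A fin by (simp add: set_integral_diff(2)[OF const Gd(1)] set_integral_const Gd(2))
  moreover have "norm (set_lebesgue_integral M A (\<lambda>x. q - G x \<bullet> d)) \<le> B * ?m"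
    using set_integral_norm_le_measure[OF A fin set_integral_diff(1)[OF const Gd(1)]] close by simp
  ultimately have "\<bar>?m * q - set_lebesgue_integral M A G \<bullet> d\<bar> / ?m \<le> B"
    using pos by (simp add: divide_le_eq)
  moreover have "?m * q - set_lebesgue_integral M A G \<bullet> d
      = ?m * (q - ((1 / ?m) *\<^sub>R set_lebesgue_integral M A G) \<bullet> d)"
    using pos by (simp add: field_simps)
  ultimately show ?thesis
    using pos by (simp add: abs_mult)
qed

lemma set_integral_norm_le_near_far:
  fixes e :: "'a::euclidean_space \<Rightarrow> 'b::{banach,second_countable_topology}"
  assumes M: "M \<in> lmeasurable" and meas: "e \<in> borel_measurable lebesgue"
    and near: "\<And>y. norm (e y) \<le> A"
    and far: "\<And>y. y \<in> M \<Longrightarrow> y \<notin> ball x s \<Longrightarrow> norm (e y) \<le> \<epsilon>" and \<epsilon>: "0 \<le> \<epsilon>"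
  shows "norm (set_lebesgue_integral lebesgue M e)
           \<le> \<epsilon> * measure lebesgue M + A * measure lebesgue (ball x s)"
proof -
  have Ms: "M \<in> sets lebesgue" "emeasure lebesgue M < \<infinity>"
    using M by (auto simp: fmeasurable_def)
  have Bs: "ball x s \<in> sets lebesgue" "emeasure lebesgue (ball x s) < \<infinity>"
    using lmeasurable_ball[of x s] by (auto simp: fmeasurable_def)
  have A0: "0 \<le> A" using near[of x] norm_ge_zero order_trans by blast
  have "norm (set_lebesgue_integral lebesgue M e) \<le> (\<integral>y. norm (indicator M y *\<^sub>R e y) \<partial>lebesgue)"
    unfolding set_lebesgue_integral_def by (rule integral_norm_bound)
  also have "\<dots> \<le> (\<integral>y. \<epsilon> * indicator M y + A * indicator (ball x s) y \<partial>lebesgue)"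
  proof (rule integral_mono)
    show "integrable lebesgue (\<lambda>y. norm (indicator M y *\<^sub>R e y))"
      using set_integrable_bounded[OF Ms meas near] unfolding set_integrable_def
      by (rule integrable_norm)
    show "integrable lebesgue (\<lambda>y. \<epsilon> * indicator M y + A * indicator (ball x s) y)"
      using Ms Bs by auto
    show "norm (indicator M y *\<^sub>R e y) \<le> \<epsilon> * indicator M y + A * indicator (ball x s) y" for y
      using near[of y] far[of y] A0 \<epsilon> by (auto simp: indicator_def)
  qed
  also have "\<dots> = \<epsilon> * measure lebesgue M + A * measure lebesgue (ball x s)"
    using Ms Bs by (subst Bochner_Integration.integral_add) auto
  finally show ?thesis .
qed

section \<open>Entropy and mass\<close>

lemma sum_indicator_disjoint:
  assumes "finite T" "M \<in> T" "x \<in> M" "\<And>K L. K \<in> T \<Longrightarrow> L \<in> T \<Longrightarrow> K \<noteq> L \<Longrightarrow> K \<inter> L = {}"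
  shows "(\<Sum>K\<in>T. f K * indicator K x) = (f M :: real)"
proof -
  have "(\<Sum>K\<in>T - {M}. f K * indicator K x) = 0"
  proof (intro sum.neutral ballI)
    fix K assume "K \<in> T - {M}"
    then have "x \<notin> K" using assms(2-4) by blast
    then show "f K * indicator K x = 0" by simp
  qed
  then show ?thesis
    using sum.remove[OF assms(1,2), of "\<lambda>K. f K * indicator K x"] assms(3) by simp
qed

lemma sum_indicator_outside:
  assumes "\<And>K. K \<in> T \<Longrightarrow> x \<notin> K"
  shows "(\<Sum>K\<in>T. f K * indicator K x) = (0::real)"
  using assms by (intro sum.neutral) auto

lemma phi_ent_nonneg: "0 \<le> s \<Longrightarrow> 0 \<le> phi_ent s"
proof (cases "s = 0")
  case False
  assume "0 \<le> s"
  with False have s: "0 < s" by simp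
  have "- ln s \<le> 1 / s - 1"
    using ln_le_minus_one[of "1 / s"] s by (simp add: ln_div)
  then have "s * (- ln s) \<le> s * (1 / s - 1)"
    using s by (intro mult_left_mono) auto
  then show ?thesis
    using s by (simp add: phi_ent_def algebra_simps)
qed (simp add: phi_ent_def)

lemma mult_le_phi_ent:
  assumes s: "0 \<le> s" and m: "0 < m" and a: "1 < a"
  shows "s * m \<le> exp a * m + m * phi_ent s / (a - 1)"
proof (cases "s \<le> exp a")
  case True
  moreover have "0 \<le> m * phi_ent s / (a - 1)"
    using phi_ent_nonneg[OF s] m a by simp
  ultimately show ?thesis
    using m by (simp add: add_increasing2)
next
  case False
  then have s0: "0 < s" using exp_gt_zero[of a] by linarith
  have "a < ln s"
    using False s0 by (metis exp_gt_zero ln_exp ln_less_cancel_iff not_le)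
  then have "s * a < s * ln s" using s0 by simp
  moreover have "phi_ent s = s * ln s - s + 1" using s0 by (simp add: phi_ent_def)
  moreover have "s * (a - 1) = s * a - s" by (simp add: algebra_simps)
  ultimately have "s * (a - 1) \<le> phi_ent s" by linarith
  then have "m * (s * (a - 1)) \<le> m * phi_ent s"
    using m by simp
  then have "s * m \<le> m * phi_ent s / (a - 1)"
    using a by (simp add: field_simps)
  moreover have "0 \<le> exp a * m" using m by simp
  ultimately show ?thesis by linarith
qed

lemma rhohat_in_cell:
  assumes "finite T" "M \<in> T" "x \<in> M" "\<And>K L. K \<in> T \<Longrightarrow> L \<in> T \<Longrightarrow> K \<noteq> L \<Longrightarrow> K \<inter> L = {}"
  shows "rhohat T \<rho> x = \<rho> M / measure lebesgue M"
  unfolding rhohat_def by (rule sum_indicator_disjoint[OF assms])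

lemma rhohat_outside_cells: "(\<And>M. M \<in> T \<Longrightarrow> x \<notin> M) \<Longrightarrow> rhohat T \<rho> x = 0"
  unfolding rhohat_def by (rule sum_indicator_outside)

lemma set_integrable_phi_ent_rhohat:
  assumes T: "finite T" and \<Omega>: "bounded \<Omega>" "open \<Omega>" and cells: "\<And>M. M \<in> T \<Longrightarrow> open M"
    and disj: "\<And>K L. K \<in> T \<Longrightarrow> L \<in> T \<Longrightarrow> K \<noteq> L \<Longrightarrow> K \<inter> L = {}"
  shows "set_integrable lebesgue \<Omega> (\<lambda>x. phi_ent (rhohat T \<rho> x))"
proof -
  let ?values = "phi_ent ` insert 0 ((\<lambda>M. \<rho> M / measure lebesgue M) ` T)"
  have "phi_ent (rhohat T \<rho> x) \<in> ?values" for x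
    using rhohat_in_cell[OF T _ _ disj] rhohat_outside_cells[of T x] by (cases "\<exists>M\<in>T. x \<in> M") auto
  moreover obtain B where "\<And>y. y \<in> ?values \<Longrightarrow> norm y \<le> B"
    using finite_imp_bounded[of ?values] T unfolding bounded_iff by auto
  ultimately have bound: "norm (phi_ent (rhohat T \<rho> x)) \<le> B" for x by blast
  have "rhohat T \<rho> \<in> borel_measurable borel"
    unfolding rhohat_def using cells
    by (intro borel_measurable_sum borel_measurable_times borel_measurable_const
        borel_measurable_indicator borel_open)
  moreover have "phi_ent \<in> borel_measurable borel"
    unfolding phi_ent_def[abs_def] by measurable
  ultimately have "(\<lambda>x. phi_ent (rhohat T \<rho> x)) \<in> borel_measurable lebesgue"
    by (rule borel_measurable_lebesgue_of_borel[OF measurable_compose])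
  with bound lmeasurable_open[OF \<Omega>] show ?thesis
    by (intro set_integrable_bounded) (auto simp: fmeasurable_def)
qed

text \<open>Outside the cells \<open>rhohat\<close> vanishes and \<open>phi_ent 0 = 1\<close>, so the integral over \<open>\<Omega>\<close>
  dominates the sum over the cells.\<close>

lemma sum_cell_entropy_le_integral:
  assumes T: "finite T" and \<Omega>: "bounded \<Omega>" "open \<Omega>"
    and cells: "\<And>M. M \<in> T \<Longrightarrow> M \<subseteq> \<Omega> \<and> open M \<and> M \<in> lmeasurable"
    and disj: "\<And>K L. K \<in> T \<Longrightarrow> L \<in> T \<Longrightarrow> K \<noteq> L \<Longrightarrow> K \<inter> L = {}"
  shows "(\<Sum>M\<in>T. measure lebesgue M * phi_ent (\<rho> M / measure lebesgue M))
           \<le> set_lebesgue_integral lebesgue \<Omega> (\<lambda>x. phi_ent (rhohat T \<rho> x))"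
proof -
  let ?f = "\<lambda>M. phi_ent (\<rho> M / measure lebesgue M)"
  have cell_int: "integrable lebesgue (\<lambda>x. ?f M * indicator M x)" if "M \<in> T" for M
    using cells[OF that] by (auto simp: fmeasurable_def)
  have "(\<Sum>M\<in>T. measure lebesgue M * ?f M) = (\<integral>x. (\<Sum>M\<in>T. ?f M * indicator M x) \<partial>lebesgue)"
    by (simp only: Bochner_Integration.integral_sum[OF cell_int] integral_mult_right_zero integral_indicator)
       (simp add: mult.commute)
  also have "\<dots> \<le> (\<integral>x. indicator \<Omega> x *\<^sub>R phi_ent (rhohat T \<rho> x) \<partial>lebesgue)"
  proof (rule integral_mono)
    show "integrable lebesgue (\<lambda>x. \<Sum>M\<in>T. ?f M * indicator M x)"
      using cell_int by auto
    show "integrable lebesgue (\<lambda>x. indicator \<Omega> x *\<^sub>R phi_ent (rhohat T \<rho> x))"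
      using set_integrable_phi_ent_rhohat[OF T \<Omega>] cells disj unfolding set_integrable_def by blast
    show "(\<Sum>M\<in>T. ?f M * indicator M x) \<le> indicator \<Omega> x *\<^sub>R phi_ent (rhohat T \<rho> x)" for x
    proof (cases "\<exists>M\<in>T. x \<in> M")
      case True
      then obtain M where M: "M \<in> T" "x \<in> M" by blast
      then have "x \<in> \<Omega>" using cells by blast
      then show ?thesis
        using rhohat_in_cell[OF T M disj] sum_indicator_disjoint[OF T M disj, of ?f] by simp
    next
      case False
      then show ?thesis
        using rhohat_outside_cells[of T x \<rho>] sum_indicator_outside[of T x ?f]
        by (auto simp: phi_ent_def indicator_def)
    qed
  qed
  finally show ?thesis
    unfolding set_lebesgue_integral_def .
qed

lemma mass_le_entropy_bound:
  assumes T: "finite T" and S: "S \<subseteq> T"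
    and disj: "\<And>K L. K \<in> T \<Longrightarrow> L \<in> T \<Longrightarrow> K \<noteq> L \<Longrightarrow> K \<inter> L = {}"
    and cells: "\<And>M. M \<in> T \<Longrightarrow> M \<in> lmeasurable \<and> 0 < measure lebesgue M"
    and \<rho>: "\<And>M. M \<in> T \<Longrightarrow> 0 \<le> \<rho> M"
    and ent: "(\<Sum>M\<in>T. measure lebesgue M * phi_ent (\<rho> M / measure lebesgue M)) \<le> C"
    and a: "1 < a" and B: "B \<in> lmeasurable" and SB: "\<And>M. M \<in> S \<Longrightarrow> M \<subseteq> B"
  shows "(\<Sum>M\<in>S. \<rho> M) \<le> exp a * measure lebesgue B + C / (a - 1)"
proof -
  let ?m = "\<lambda>M. measure lebesgue M"
  let ?p = "\<lambda>M. ?m M * phi_ent (\<rho> M / ?m M)"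
  have fS: "finite S" using T S finite_subset by auto
  have "\<rho> M \<le> exp a * ?m M + ?p M / (a - 1)" if "M \<in> T" for M
    using mult_le_phi_ent[of "\<rho> M / ?m M" "?m M" a] \<rho>[OF that] cells[OF that] a by simp
  then have "(\<Sum>M\<in>S. \<rho> M) \<le> (\<Sum>M\<in>S. exp a * ?m M + ?p M / (a - 1))"
    using S by (intro sum_mono) auto
  also have "\<dots> = exp a * (\<Sum>M\<in>S. ?m M) + (\<Sum>M\<in>S. ?p M) / (a - 1)"
    by (simp add: sum.distrib sum_distrib_left sum_divide_distrib)
  also have "(\<Sum>M\<in>S. ?m M) = measure lebesgue (\<Union>S)"
  proof (rule measure_Union'[symmetric, OF fS])
    show "M \<in> lmeasurable" if "M \<in> S" for M using that S cells by blast
    show "pairwise disjnt S" using S disj unfolding pairwise_def disjnt_def by blast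
  qed
  also have "\<dots> \<le> measure lebesgue B"
  proof (rule measure_mono_fmeasurable[OF _ _ B])
    show "\<Union>S \<subseteq> B" using SB by blast
    show "\<Union>S \<in> sets lebesgue" using S cells fS by (intro sets.finite_Union) auto
  qed
  also have "(\<Sum>M\<in>S. ?p M) \<le> (\<Sum>M\<in>T. ?p M)"
  proof (rule sum_mono2[OF T S])
    show "0 \<le> ?p M" if "M \<in> T - S" for M
      using that \<rho> cells phi_ent_nonneg by simp
  qed
  also have "\<dots> \<le> C" by (rule ent)
  finally show ?thesis using a by (simp add: divide_right_mono)
qed

section \<open>The interaction kernel\<close>

lemma sum_weighted_split_le:
  fixes \<rho> :: "'c \<Rightarrow> real"
  assumes "finite T" "\<And>M. M \<in> T \<Longrightarrow> 0 \<le> \<rho> M" "(\<Sum>M\<in>T. \<rho> M) = 1" "0 \<le> A" "0 \<le> e"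
  shows "(\<Sum>M\<in>T. \<rho> M * (if P M then A else e)) \<le> e + A * (\<Sum>M\<in>{M\<in>T. P M}. \<rho> M)"
proof -
  have "(\<Sum>M\<in>T. \<rho> M * (if P M then A else e)) \<le> (\<Sum>M\<in>T. \<rho> M * e + (if P M then \<rho> M * A else 0))"
    using assms by (intro sum_mono) (auto simp: add_increasing)
  also have "\<dots> = (\<Sum>M\<in>T. \<rho> M) * e + (\<Sum>M\<in>{M\<in>T. P M}. \<rho> M * A)"
    using assms(1) by (simp add: sum.distrib sum_distrib_right sum.inter_filter)
  also have "\<dots> = e + A * (\<Sum>M\<in>{M\<in>T. P M}. \<rho> M)"
    using assms(3) by (simp add: sum_distrib_left sum_distrib_right mult.commute)
  finally show ?thesis .
qed

locale pointy_kernel =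
  fixes W :: "'a::euclidean_space \<Rightarrow> real" and LW :: real
  assumes lipschitz: "LW-lipschitz_on UNIV W"
    and differentiable_off_origin: "\<forall>x. x \<noteq> 0 \<longrightarrow> W differentiable (at x)"
    and grad_continuous_off_origin: "continuous_on (- {0}) (grad W)"
begin

text \<open>\<open>W\<close> need not be differentiable at the origin, where \<open>grad W 0\<close> is an unspecified vector;
  taking it into the maximum makes \<open>grad_bound\<close> a bound for \<open>grad W\<close> everywhere.\<close>

definition grad_bound :: real where
  "grad_bound = max LW (norm (grad W 0))"

lemma lipschitz_constant_nonneg: "0 \<le> LW"
  using lipschitz by (simp add: lipschitz_on_def)

lemma grad_bound_nonneg: "0 \<le> grad_bound"
  using lipschitz_constant_nonneg by (simp add: grad_bound_def)

lemma has_derivative_W_off_origin: "z \<noteq> 0 \<Longrightarrow> (W has_derivative (\<lambda>u. grad W z \<bullet> u)) (at z)"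
  using differentiable_off_origin has_derivative_grad by blast

lemma norm_grad_W_le: "norm (grad W z) \<le> grad_bound"
proof (cases "z = 0")
  case False
  then have "norm (grad W z) \<le> LW"
    using norm_grad_le_lipschitz[OF lipschitz has_derivative_W_off_origin] by blast
  then show ?thesis by (simp add: grad_bound_def)
qed (simp add: grad_bound_def)

lemma abs_W_diff_le: "\<bar>W a - W b\<bar> \<le> LW * norm (a - b)"
  using lipschitz unfolding lipschitz_on_def by (metis UNIV_I dist_norm dist_real_def)

lemma borel_measurable_W [measurable]: "W \<in> borel_measurable borel"
  using borel_measurable_continuous_onI[OF lipschitz_on_continuous_on[OF lipschitz]] .

lemma borel_measurable_grad_W [measurable]: "grad W \<in> borel_measurable borel"
proof -
  have "(\<lambda>x. if x \<in> - {0} then grad W x else grad W 0) \<in> borel_measurable borel"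
    by (rule borel_measurable_continuous_on_if) (auto intro: grad_continuous_off_origin)
  moreover have "(\<lambda>x. if x \<in> - {0} then grad W x else grad W 0) = grad W" by auto
  ultimately show ?thesis by simp
qed

lemma W_first_order_crude: "\<bar>W (z + u) - W z - grad W z' \<bullet> u\<bar> \<le> (LW + grad_bound) * norm u"
proof -
  have "\<bar>grad W z' \<bullet> u\<bar> \<le> grad_bound * norm u"
    using Cauchy_Schwarz_ineq2[of "grad W z'" u] mult_right_mono[OF norm_grad_W_le norm_ge_zero]
    by (meson order_trans)
  then show ?thesis
    using abs_W_diff_le[of "z + u" z] by (simp add: algebra_simps)
qed

lemma annulus_neighbourhood:
  assumes "s \<le> norm z" "norm z \<le> R" "norm (p - z) \<le> s / 2" "norm (p - z) \<le> 1"
  shows "p \<in> cball 0 (R + 1) - ball 0 (s / 2)"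
  using assms norm_triangle_ineq2[of z p] norm_triangle_sub[of p z]
  by (auto simp: dist_norm norm_minus_commute)

lemma W_first_order_off_origin:
  assumes s: "0 < s" and e: "0 < e"
  obtains \<delta> where "0 < \<delta>" "\<And>z u w. s \<le> norm z \<Longrightarrow> norm z \<le> R \<Longrightarrow> norm u \<le> \<delta> \<Longrightarrow> norm w \<le> \<delta> \<Longrightarrow>
     \<bar>W (z + u) - W z - grad W (z + w) \<bullet> u\<bar> \<le> e * norm u"
proof -
  let ?A = "cball (0::'a) (R + 1) - ball 0 (s / 2)"
  have A: "compact ?A" "?A \<subseteq> - {0}" using s by (auto intro: compact_diff)
  obtain \<delta>0 where \<delta>0: "0 < \<delta>0"
    "\<And>a b x. closed_segment a b \<subseteq> ?A \<Longrightarrow> x \<in> ?A \<Longrightarrow> dist a x \<le> \<delta>0 \<Longrightarrow> dist b a \<le> \<delta>0 \<Longrightarrow>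
       \<bar>W b - W a - grad W x \<bullet> (b - a)\<bar> \<le> e * norm (b - a)"
    using uniform_first_order_estimate[OF A(1) _ continuous_on_subset[OF grad_continuous_off_origin A(2)] e]
      A(2) differentiable_off_origin by blast
  define \<delta> where "\<delta> = min \<delta>0 (min (s / 2) 1)"
  have "\<bar>W (z + u) - W z - grad W (z + w) \<bullet> u\<bar> \<le> e * norm u"
    if z: "s \<le> norm z" "norm z \<le> R" and u: "norm u \<le> \<delta>" and w: "norm w \<le> \<delta>" for z u w
  proof -
    have "closed_segment z (z + u) \<subseteq> ?A"
    proof
      fix p assume "p \<in> closed_segment z (z + u)"
      then have "norm (p - z) \<le> norm u"
        using dist_in_closed_segment[of p z "z + u"] by (simp add: dist_norm norm_minus_commute)
      then show "p \<in> ?A" using annulus_neighbourhood[OF z] u by (simp add: \<delta>_def)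
    qed
    moreover have "z + w \<in> ?A"
      using annulus_neighbourhood[OF z, of "z + w"] w by (simp add: \<delta>_def)
    ultimately show ?thesis
      using \<delta>0(2)[of z "z + u" "z + w"] u w by (simp add: \<delta>_def dist_norm)
  qed
  moreover have "0 < \<delta>" using \<delta>0 s by (simp add: \<delta>_def)
  ultimately show thesis by (rule that[rotated])
qed

lemma grad_W_uniformly_continuous_off_origin:
  assumes s: "0 < s" and e: "0 < e"
  obtains \<delta> where "0 < \<delta>"
    "\<And>z w. s \<le> norm z \<Longrightarrow> norm z \<le> R \<Longrightarrow> norm w \<le> \<delta> \<Longrightarrow> norm (grad W (z + w) - grad W z) \<le> e"
proof -
  let ?A = "cball (0::'a) (R + 1) - ball 0 (s / 2)"
  have "compact ?A" "?A \<subseteq> - {0}" using s by (auto intro: compact_diff)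
  then obtain d where d: "0 < d"
    "\<And>x x'. x \<in> ?A \<Longrightarrow> x' \<in> ?A \<Longrightarrow> dist x' x < d \<Longrightarrow> dist (grad W x') (grad W x) < e"
    using compact_uniformly_continuous[OF continuous_on_subset[OF grad_continuous_off_origin]] e
    unfolding uniformly_continuous_on_def by metis
  define \<delta> where "\<delta> = min (d / 2) (min (s / 2) 1)"
  have "norm (grad W (z + w) - grad W z) \<le> e"
    if z: "s \<le> norm z" "norm z \<le> R" and w: "norm w \<le> \<delta>" for z w
    using d(2)[of z "z + w"] annulus_neighbourhood[OF z, of z] annulus_neighbourhood[OF z, of "z + w"]
      w d(1) s by (simp add: \<delta>_def dist_norm)
  moreover have "0 < \<delta>" using d s by (simp add: \<delta>_def)
  ultimately show thesis by (rule that[rotated])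
qed

definition cell_potential :: "'a set \<Rightarrow> 'a \<Rightarrow> real" where
  "cell_potential M x = set_lebesgue_integral lebesgue M (\<lambda>y. W (x - y))"

definition cell_grad :: "'a set \<Rightarrow> 'a \<Rightarrow> 'a" where
  "cell_grad M x = set_lebesgue_integral lebesgue M (\<lambda>y. grad W (x - y))"

lemma set_integrable_W_translate:
  assumes M: "M \<in> lmeasurable" "bounded M"
  shows "set_integrable lebesgue M (\<lambda>y. W (x - y))"
proof -
  obtain B where B: "\<And>y. y \<in> M \<Longrightarrow> norm y \<le> B"
    using M(2) unfolding bounded_iff by auto
  have "norm (W (x - y)) \<le> \<bar>W 0\<bar> + LW * (norm x + B)" if "y \<in> M" for y
  proof -
    have "norm (x - y) \<le> norm x + B" using B[OF that] norm_triangle_ineq4[of x y] by linarith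
    then have "LW * norm (x - y) \<le> LW * (norm x + B)"
      using lipschitz_constant_nonneg by (rule mult_left_mono)
    then show ?thesis using abs_W_diff_le[of "x - y" 0] by simp
  qed
  moreover have "(\<lambda>y. W (x - y)) \<in> borel_measurable lebesgue"
    by (rule borel_measurable_lebesgue_of_borel) measurable
  ultimately show ?thesis
    using M(1) by (intro set_integrable_bounded) (auto simp: fmeasurable_def)
qed

lemma set_integrable_grad_W_translate:
  assumes "M \<in> lmeasurable"
  shows "set_integrable lebesgue M (\<lambda>y. grad W (x - y))"
proof -
  have "(\<lambda>y. grad W (x - y)) \<in> borel_measurable lebesgue"
    by (rule borel_measurable_lebesgue_of_borel) measurable
  with assms show ?thesis
    by (intro set_integrable_bounded[OF _ _ _ norm_grad_W_le]) (auto simp: fmeasurable_def)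
qed

lemma cell_potential_increment_le:
  assumes M: "M \<in> lmeasurable" "bounded M" and e: "0 \<le> e"
    and far: "\<And>t. t \<in> M \<Longrightarrow> t \<notin> ball x s \<Longrightarrow>
                \<bar>W (y - t) - W (x - t) - grad W (x - t) \<bullet> (y - x)\<bar> \<le> e * norm (y - x)"
  shows "\<bar>cell_potential M y - cell_potential M x - cell_grad M x \<bullet> (y - x)\<bar>
           \<le> (e * measure lebesgue M + (LW + grad_bound) * measure lebesgue (ball x s)) * norm (y - x)"
proof -
  let ?f = "\<lambda>t. W (y - t) - W (x - t) - grad W (x - t) \<bullet> (y - x)"
  note Wy = set_integrable_W_translate[OF M, of y] and Wx = set_integrable_W_translate[OF M, of x]
  note G = set_integral_inner_left[OF set_integrable_grad_W_translate[OF M(1), of x], of "y - x"]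
  have "cell_potential M y - cell_potential M x - cell_grad M x \<bullet> (y - x)
      = set_lebesgue_integral lebesgue M ?f"
    unfolding cell_potential_def cell_grad_def
    by (simp add: G(2) set_integral_diff(2)[OF set_integral_diff(1)[OF Wy Wx] G(1)]
        set_integral_diff(2)[OF Wy Wx])
  moreover have "norm (set_lebesgue_integral lebesgue M ?f) \<le> (e * norm (y - x)) * measure lebesgue M
                      + ((LW + grad_bound) * norm (y - x)) * measure lebesgue (ball x s)"
  proof (rule set_integral_norm_le_near_far[OF M(1)])
    show "?f \<in> borel_measurable lebesgue"
      by (rule borel_measurable_lebesgue_of_borel) measurable
    show "norm (?f t) \<le> (LW + grad_bound) * norm (y - x)" for t
      using W_first_order_crude[of "x - t" "y - x" "x - t"] by simp
  qed (use far e in auto)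
  ultimately show ?thesis by (simp add: algebra_simps)
qed

lemma has_derivative_cell_potential:
  assumes M: "M \<in> lmeasurable" "bounded M"
  shows "(cell_potential M has_derivative (\<lambda>u. cell_grad M x \<bullet> u)) (at x)"
  unfolding has_derivative_at_alt
proof (intro conjI allI impI)
  show "bounded_linear (\<lambda>u. cell_grad M x \<bullet> u)" by (rule bounded_linear_inner_right)
  fix \<epsilon> :: real assume \<epsilon>: "0 < \<epsilon>"
  let ?m = "measure lebesgue M"
  have \<Lambda>: "0 \<le> LW + grad_bound" using lipschitz_constant_nonneg grad_bound_nonneg by simp
  have \<epsilon>2: "0 < \<epsilon> / 2" using \<epsilon> by simp
  obtain s where s: "0 < s" "\<And>z::'a. (LW + grad_bound) * measure lebesgue (ball z s) \<le> \<epsilon> / 2"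
    using measure_ball_uniformly_small[OF \<Lambda> \<epsilon>2] by blast
  obtain B where B: "\<And>t. t \<in> M \<Longrightarrow> norm t \<le> B" using M(2) unfolding bounded_iff by auto
  obtain e where e: "0 < e" "e * ?m \<le> \<epsilon> / 2"
    using exists_small_factor[OF measure_nonneg \<epsilon>2] by blast
  obtain \<delta> where \<delta>: "0 < \<delta>" "\<And>z u w. s \<le> norm z \<Longrightarrow> norm z \<le> norm x + B \<Longrightarrow> norm u \<le> \<delta> \<Longrightarrow>
      norm w \<le> \<delta> \<Longrightarrow> \<bar>W (z + u) - W z - grad W (z + w) \<bullet> u\<bar> \<le> e * norm u"
    using W_first_order_off_origin[OF s(1) e(1), where R = "norm x + B"] by blast
  have "\<bar>cell_potential M y - cell_potential M x - cell_grad M x \<bullet> (y - x)\<bar> \<le> \<epsilon> * norm (y - x)"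
    if y: "norm (y - x) < \<delta>" for y
  proof -
    have "\<bar>W (y - t) - W (x - t) - grad W (x - t) \<bullet> (y - x)\<bar> \<le> e * norm (y - x)"
      if "t \<in> M" "t \<notin> ball x s" for t
      using \<delta>(2)[of "x - t" "y - x" 0] that y \<delta>(1) B[of t] norm_triangle_ineq4[of x t]
      by (simp add: dist_norm)
    then have "\<bar>cell_potential M y - cell_potential M x - cell_grad M x \<bullet> (y - x)\<bar>
        \<le> (e * ?m + (LW + grad_bound) * measure lebesgue (ball x s)) * norm (y - x)"
      by (rule cell_potential_increment_le[OF M less_imp_le[OF e(1)]])
    also have "\<dots> \<le> \<epsilon> * norm (y - x)"
      using e(2) s(2)[of x] by (intro mult_right_mono) auto
    finally show ?thesis .
  qed
  with \<delta>(1) show "\<exists>d>0. \<forall>y. norm (y - x) < d \<longrightarrow>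
      norm (cell_potential M y - cell_potential M x - cell_grad M x \<bullet> (y - x)) \<le> \<epsilon> * norm (y - x)"
    by auto
qed

lemma cell_grad_increment_le:
  assumes M: "M \<in> lmeasurable" and e: "0 \<le> e"
    and far: "\<And>t. t \<in> M \<Longrightarrow> t \<notin> ball x s \<Longrightarrow> norm (grad W (y - t) - grad W (x - t)) \<le> e"
  shows "norm (cell_grad M y - cell_grad M x)
           \<le> e * measure lebesgue M + 2 * grad_bound * measure lebesgue (ball x s)"
proof -
  have "cell_grad M y - cell_grad M x
      = set_lebesgue_integral lebesgue M (\<lambda>t. grad W (y - t) - grad W (x - t))"
    unfolding cell_grad_def
    using set_integral_diff(2)[OF set_integrable_grad_W_translate[OF M] set_integrable_grad_W_translate[OF M]]
    by simp
  also have "norm \<dots> \<le> e * measure lebesgue M + 2 * grad_bound * measure lebesgue (ball x s)"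
  proof (rule set_integral_norm_le_near_far[OF M])
    show "(\<lambda>t. grad W (y - t) - grad W (x - t)) \<in> borel_measurable lebesgue"
      by (rule borel_measurable_lebesgue_of_borel) measurable
    show "norm (grad W (y - t) - grad W (x - t)) \<le> 2 * grad_bound" for t
      using norm_triangle_ineq4[of "grad W (y - t)" "grad W (x - t)"] norm_grad_W_le[of "y - t"]
        norm_grad_W_le[of "x - t"] by linarith
  qed (use far e in auto)
  finally show ?thesis .
qed

lemma continuous_on_cell_grad:
  assumes M: "M \<in> lmeasurable" "bounded M"
  shows "continuous_on UNIV (cell_grad M)"
  unfolding continuous_on_iff
proof (intro ballI allI impI)
  fix x :: 'a and \<epsilon> :: real assume \<epsilon>: "0 < \<epsilon>"
  let ?m = "measure lebesgue M"
  have \<Lambda>: "0 \<le> 2 * grad_bound" using grad_bound_nonneg by simp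
  have \<epsilon>4: "0 < \<epsilon> / 4" using \<epsilon> by simp
  obtain s where s: "0 < s" "\<And>z::'a. 2 * grad_bound * measure lebesgue (ball z s) \<le> \<epsilon> / 4"
    using measure_ball_uniformly_small[OF \<Lambda> \<epsilon>4] by blast
  obtain B where B: "\<And>t. t \<in> M \<Longrightarrow> norm t \<le> B" using M(2) unfolding bounded_iff by auto
  obtain e where e: "0 < e" "e * ?m \<le> \<epsilon> / 4"
    using exists_small_factor[OF measure_nonneg \<epsilon>4] by blast
  obtain \<delta> where \<delta>: "0 < \<delta>" "\<And>z w. s \<le> norm z \<Longrightarrow> norm z \<le> norm x + B \<Longrightarrow> norm w \<le> \<delta> \<Longrightarrow>
      norm (grad W (z + w) - grad W z) \<le> e"
    using grad_W_uniformly_continuous_off_origin[OF s(1) e(1), where R = "norm x + B"] by blast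
  have "dist (cell_grad M y) (cell_grad M x) < \<epsilon>" if y: "dist y x < \<delta>" for y
  proof -
    have "norm (grad W (y - t) - grad W (x - t)) \<le> e" if "t \<in> M" "t \<notin> ball x s" for t
      using \<delta>(2)[of "x - t" "y - x"] that y B[of t] norm_triangle_ineq4[of x t]
      by (simp add: dist_norm)
    then have "norm (cell_grad M y - cell_grad M x) \<le> e * ?m + 2 * grad_bound * measure lebesgue (ball x s)"
      by (rule cell_grad_increment_le[OF M(1) less_imp_le[OF e(1)]])
    then show ?thesis using e(2) s(2)[of x] \<epsilon> by (simp add: dist_norm)
  qed
  with \<delta>(1) show "\<exists>d>0. \<forall>y\<in>UNIV. dist y x < d \<longrightarrow> dist (cell_grad M y) (cell_grad M x) < \<epsilon>"
    by auto
qed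

lemma Qpot_rhohat_eq:
  assumes T: "finite T" "\<And>M. M \<in> T \<Longrightarrow> M \<in> lmeasurable \<and> bounded M"
  shows "Qpot V W (rhohat T \<rho>) x = V x + (\<Sum>M\<in>T. \<rho> M / measure lebesgue M * cell_potential M x)"
proof -
  have eq: "(\<lambda>y. W (x - y) * rhohat T \<rho> y) =
      (\<lambda>y. \<Sum>M\<in>T. \<rho> M / measure lebesgue M * (indicator M y *\<^sub>R W (x - y)))"
    by (simp add: rhohat_def sum_distrib_left algebra_simps)
  have int: "integrable lebesgue (\<lambda>y. \<rho> M / measure lebesgue M * (indicator M y *\<^sub>R W (x - y)))"
    if "M \<in> T" for M
    using set_integrable_W_translate[of M x] T(2)[OF that] unfolding set_integrable_def by auto
  show ?thesis
    unfolding Qpot_def eq cell_potential_def set_lebesgue_integral_def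
    by (simp only: Bochner_Integration.integral_sum[OF int] integral_mult_right_zero)
qed

lemma grad_Qpot_rhohat:
  assumes T: "finite T" "\<And>M. M \<in> T \<Longrightarrow> M \<in> lmeasurable \<and> bounded M"
    and V: "V differentiable (at x)"
  shows "grad (Qpot V W (rhohat T \<rho>)) x
           = grad V x + (\<Sum>M\<in>T. (\<rho> M / measure lebesgue M) *\<^sub>R cell_grad M x)"
proof -
  have "Qpot V W (rhohat T \<rho>) = (\<lambda>x. V x + (\<Sum>M\<in>T. \<rho> M / measure lebesgue M * cell_potential M x))"
    using Qpot_rhohat_eq[of T] T by blast
  moreover have "((\<lambda>x. V x + (\<Sum>M\<in>T. \<rho> M / measure lebesgue M * cell_potential M x)) has_derivative
         (\<lambda>u. grad V x \<bullet> u + (\<Sum>M\<in>T. \<rho> M / measure lebesgue M * (cell_grad M x \<bullet> u)))) (at x)"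
    using T(2) by (intro has_derivative_add has_derivative_grad[OF V] has_derivative_sum
        has_derivative_mult_right has_derivative_cell_potential) auto
  moreover have "(\<lambda>u. grad V x \<bullet> u + (\<Sum>M\<in>T. \<rho> M / measure lebesgue M * (cell_grad M x \<bullet> u)))
      = (\<lambda>u. (grad V x + (\<Sum>M\<in>T. (\<rho> M / measure lebesgue M) *\<^sub>R cell_grad M x)) \<bullet> u)"
    by (simp add: fun_eq_iff inner_add_left inner_sum_left)
  ultimately show ?thesis
    by (intro grad_eqI) simp
qed

lemma continuous_on_grad_Qpot_rhohat:
  assumes T: "finite T" "\<And>M. M \<in> T \<Longrightarrow> M \<in> lmeasurable \<and> bounded M"
    and V: "\<forall>x. V differentiable (at x)" "continuous_on UNIV (grad V)"
  shows "continuous_on UNIV (grad (Qpot V W (rhohat T \<rho>)))"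
proof -
  have "continuous_on UNIV (\<lambda>x. grad V x + (\<Sum>M\<in>T. (\<rho> M / measure lebesgue M) *\<^sub>R cell_grad M x))"
    using T(2) by (intro continuous_on_add V(2) continuous_on_sum continuous_on_scaleR
        continuous_on_const continuous_on_cell_grad) auto
  moreover have "grad (Qpot V W (rhohat T \<rho>))
      = (\<lambda>x. grad V x + (\<Sum>M\<in>T. (\<rho> M / measure lebesgue M) *\<^sub>R cell_grad M x))"
    using grad_Qpot_rhohat[of T] T V(1) by (intro ext) blast
  ultimately show ?thesis by simp
qed

lemma cell_interaction_estimate:
  assumes M: "M \<in> lmeasurable" "0 < measure lebesgue M" and \<rho>: "0 \<le> \<rho>M"
    and pointwise: "\<And>y. y \<in> M \<Longrightarrow> \<bar>W (b - c) - W (a - c) - grad W (x - y) \<bullet> (b - a)\<bar> \<le> B"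
  shows "\<bar>\<rho>M * (W (b - c) - W (a - c)) - \<rho>M / measure lebesgue M * (cell_grad M x \<bullet> (b - a))\<bar>
           \<le> \<rho>M * B"
proof -
  let ?m = "measure lebesgue M" and ?d = "b - a" and ?\<alpha> = "W (b - c) - W (a - c)"
  have "\<bar>?\<alpha> - (1 / ?m) * (cell_grad M x \<bullet> ?d)\<bar> \<le> B"
  proof -
    have "\<bar>?\<alpha> - ((1 / ?m) *\<^sub>R cell_grad M x) \<bullet> ?d\<bar> \<le> B"
      unfolding cell_grad_def
    proof (rule average_inner_estimate)
      show "M \<in> sets lebesgue" "0 < ?m" using M by auto
      show "(\<lambda>y. grad W (x - y)) \<in> borel_measurable lebesgue"
        by (rule borel_measurable_lebesgue_of_borel) measurable
      show "bounded ((\<lambda>y. grad W (x - y)) ` M)"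
        using norm_grad_W_le by (auto simp: bounded_iff)
    qed (rule pointwise)
    then show ?thesis by simp
  qed
  then have "\<rho>M * \<bar>?\<alpha> - (1 / ?m) * (cell_grad M x \<bullet> ?d)\<bar> \<le> \<rho>M * B"
    by (rule mult_left_mono[OF _ \<rho>])
  moreover have "\<rho>M * ?\<alpha> - \<rho>M / ?m * (cell_grad M x \<bullet> ?d) = \<rho>M * (?\<alpha> - (1 / ?m) * (cell_grad M x \<bullet> ?d))"
    by (simp add: algebra_simps)
  ultimately show ?thesis
    using \<rho> by (simp add: abs_mult)
qed

text \<open>Cells whose centre \<open>c\<close> is at distance at least \<open>r\<close> from \<open>a\<close> see \<open>W\<close> only away from
  its singularity; the others are controlled crudely by the Lipschitz bound.\<close>

lemma cell_interaction_near_far: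
  assumes M: "M \<in> lmeasurable" "0 < measure lebesgue M" and \<rho>: "0 \<le> \<rho>M"
    and cell: "\<And>y. y \<in> M \<Longrightarrow> norm (y - c) \<le> h"
    and ab: "norm (b - a) \<le> 2 * h" and xa: "norm (x - a) \<le> 3 * h" and h\<delta>: "4 * h \<le> \<delta>"
    and aR: "norm (a - c) \<le> R"
    and far: "\<And>z u w. r \<le> norm z \<Longrightarrow> norm z \<le> R \<Longrightarrow> norm u \<le> \<delta> \<Longrightarrow> norm w \<le> \<delta> \<Longrightarrow>
                \<bar>W (z + u) - W z - grad W (z + w) \<bullet> u\<bar> \<le> e * norm u"
  shows "\<bar>\<rho>M * (W (b - c) - W (a - c)) - \<rho>M / measure lebesgue M * (cell_grad M x \<bullet> (b - a))\<bar>
           \<le> \<rho>M * (if norm (a - c) < r then (LW + grad_bound) * norm (b - a) else e * norm (b - a))"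
proof (rule cell_interaction_estimate[OF M \<rho>])
  fix y assume y: "y \<in> M"
  show "\<bar>W (b - c) - W (a - c) - grad W (x - y) \<bullet> (b - a)\<bar>
      \<le> (if norm (a - c) < r then (LW + grad_bound) * norm (b - a) else e * norm (b - a))"
  proof (cases "norm (a - c) < r")
    case True
    then show ?thesis
      using W_first_order_crude[of "a - c" "b - a" "x - y"] by simp
  next
    case False
    have "norm ((x - a) - (y - c)) \<le> norm (x - a) + norm (y - c)"
      by (rule norm_triangle_ineq4)
    then have "norm ((x - a) - (y - c)) \<le> \<delta>" using xa cell[OF y] h\<delta> by linarith
    moreover have "norm (b - a) \<le> \<delta>" using ab h\<delta> cell[OF y] norm_ge_zero[of "y - c"] by linarith
    ultimately show ?thesis
      using far[of "a - c" "b - a" "(x - a) - (y - c)"] False aR by (simp add: algebra_simps)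
  qed
qed

lemma interaction_estimate:
  assumes T: "finite T"
    and cells: "\<And>M. M \<in> T \<Longrightarrow> M \<in> lmeasurable \<and> 0 < measure lebesgue M \<and> (\<forall>y\<in>M. norm (y - bary M) \<le> h)"
    and \<rho>: "\<And>M. M \<in> T \<Longrightarrow> 0 \<le> \<rho> M" and total: "(\<Sum>M\<in>T. \<rho> M) = 1"
    and ab: "norm (b - a) \<le> 2 * h" and xa: "norm (x - a) \<le> 3 * h" and h\<delta>: "4 * h \<le> \<delta>"
    and aR: "\<And>M. M \<in> T \<Longrightarrow> norm (a - bary M) \<le> R" and e: "0 \<le> e"
    and far: "\<And>z u w. r \<le> norm z \<Longrightarrow> norm z \<le> R \<Longrightarrow> norm u \<le> \<delta> \<Longrightarrow> norm w \<le> \<delta> \<Longrightarrow>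
                \<bar>W (z + u) - W z - grad W (z + w) \<bullet> u\<bar> \<le> e * norm u"
  shows "\<bar>(\<Sum>M\<in>T. \<rho> M * (W (b - bary M) - W (a - bary M)))
           - (\<Sum>M\<in>T. (\<rho> M / measure lebesgue M) *\<^sub>R cell_grad M x) \<bullet> (b - a)\<bar>
         \<le> e * norm (b - a) + (LW + grad_bound) * norm (b - a) * (\<Sum>M\<in>{M\<in>T. norm (a - bary M) < r}. \<rho> M)"
proof -
  let ?d = "b - a" and ?\<Lambda> = "LW + grad_bound"
  let ?I = "\<lambda>M. \<rho> M * (W (b - bary M) - W (a - bary M)) - \<rho> M / measure lebesgue M * (cell_grad M x \<bullet> ?d)"
  have "\<bar>(\<Sum>M\<in>T. \<rho> M * (W (b - bary M) - W (a - bary M)))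
           - (\<Sum>M\<in>T. (\<rho> M / measure lebesgue M) *\<^sub>R cell_grad M x) \<bullet> ?d\<bar> = \<bar>\<Sum>M\<in>T. ?I M\<bar>"
    by (simp add: inner_sum_left sum_subtractf)
  also have "\<dots> \<le> (\<Sum>M\<in>T. \<bar>?I M\<bar>)" by (rule sum_abs)
  also have "\<dots> \<le> (\<Sum>M\<in>T. \<rho> M * (if norm (a - bary M) < r then ?\<Lambda> * norm ?d else e * norm ?d))"
  proof (rule sum_mono)
    fix M assume "M \<in> T"
    then show "\<bar>?I M\<bar> \<le> \<rho> M * (if norm (a - bary M) < r then ?\<Lambda> * norm ?d else e * norm ?d)"
      using cells[of M] \<rho>[of M] aR[of M]
      by (intro cell_interaction_near_far[OF _ _ _ _ ab xa h\<delta> _ far]) auto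
  qed
  also have "\<dots> \<le> e * norm ?d + ?\<Lambda> * norm ?d * (\<Sum>M\<in>{M\<in>T. norm (a - bary M) < r}. \<rho> M)"
    using T \<rho> total e lipschitz_constant_nonneg grad_bound_nonneg
    by (intro sum_weighted_split_le) auto
  finally show ?thesis .
qed

end

section \<open>Tessellations\<close>

lemma sets_hausdorff_measure [simp]:
  "sets (hausdorff_measure s :: 'a::euclidean_space measure) = sets borel"
  unfolding hausdorff_measure_def
  using sets.sigma_sets_eq[of "borel :: 'a measure"] by simp

lemma average_inner_estimate_continuous:
  fixes G :: "'a::euclidean_space \<Rightarrow> 'b::euclidean_space"
  assumes G: "continuous_on UNIV G" and S: "compact S" "A \<subseteq> S"
    and A: "A \<in> sets M" "0 < measure M A" and meas: "G \<in> borel_measurable M"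
    and close: "\<And>x. x \<in> S \<Longrightarrow> \<bar>q - G x \<bullet> d\<bar> \<le> B"
  shows "\<bar>q - ((1 / measure M A) *\<^sub>R set_lebesgue_integral M A G) \<bullet> d\<bar> \<le> B"
proof (rule average_inner_estimate[OF A meas])
  have "compact (G ` S)"
    using compact_continuous_image[OF continuous_on_subset[OF G] S(1)] by simp
  then show "bounded (G ` A)"
    using S(2) by (meson bounded_subset compact_imp_bounded image_mono)
qed (use S(2) close in blast)

locale nondegenerate_tessellations =
  fixes \<Omega> :: "'a::euclidean_space set" and H :: "real set" and T :: "real \<Rightarrow> 'a set set"
    and \<zeta> :: real
  assumes open_domain: "open \<Omega>" and bounded_domain: "bounded \<Omega>" and convex_domain: "convex \<Omega>"
    and meshes_pos: "H \<subseteq> {0<..}"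
    and tessellations: "\<forall>h\<in>H. tessellation \<Omega> (T h) \<and> mesh (T h) = h"
    and zeta_pos: "0 < \<zeta>"
    and inner_balls: "\<forall>h\<in>H. \<forall>K\<in>T h. ball (bary K) (\<zeta> * h) \<subseteq> K"
    and face_measures: "\<forall>h\<in>H. \<forall>(K, L)\<in>edges (T h).
      \<zeta> * h ^ (DIM('a) - 1) \<le> measure (hausdorff_measure (DIM('a) - 1)) (face K L)"
begin

lemma mesh_pos: "h \<in> H \<Longrightarrow> 0 < h"
  using meshes_pos by auto

lemma finite_cells: "h \<in> H \<Longrightarrow> finite (T h)"
  using tessellations by (auto simp: tessellation_def)

lemma disjoint_cells: "h \<in> H \<Longrightarrow> K \<in> T h \<Longrightarrow> L \<in> T h \<Longrightarrow> K \<noteq> L \<Longrightarrow> K \<inter> L = {}"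
  using tessellations by (auto simp: tessellation_def)

lemma cell_subset_domain: "h \<in> H \<Longrightarrow> K \<in> T h \<Longrightarrow> K \<subseteq> \<Omega>"
  using tessellations by (auto simp: tessellation_def)

lemma open_cell: "h \<in> H \<Longrightarrow> K \<in> T h \<Longrightarrow> open K"
  using tessellations by (auto simp: tessellation_def)

lemma bounded_cell: "h \<in> H \<Longrightarrow> K \<in> T h \<Longrightarrow> bounded K"
  using bounded_subset[OF bounded_domain cell_subset_domain] .

lemma lmeasurable_cell: "h \<in> H \<Longrightarrow> K \<in> T h \<Longrightarrow> K \<in> lmeasurable"
  using lmeasurable_open[OF bounded_cell open_cell] .

lemma bary_in_cell:
  assumes "h \<in> H" "K \<in> T h"
  shows "bary K \<in> K"
proof -
  have "bary K \<in> ball (bary K) (\<zeta> * h)" using zeta_pos mesh_pos[OF assms(1)] by simp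
  then show ?thesis using inner_balls assms by blast
qed

lemma measure_cell_pos:
  assumes "h \<in> H" "K \<in> T h"
  shows "0 < measure lebesgue K"
proof -
  have "0 < measure lebesgue (ball (bary K) (\<zeta> * h))"
    using zeta_pos mesh_pos[OF assms(1)] by simp
  also have "\<dots> \<le> measure lebesgue K"
    using inner_balls assms lmeasurable_cell[OF assms] by (intro measure_mono_fmeasurable) auto
  finally show ?thesis .
qed

lemma norm_sub_bary_le:
  assumes "h \<in> H" "K \<in> T h" "y \<in> closure K"
  shows "norm (y - bary K) \<le> h"
proof -
  have "bary K \<in> closure K" using bary_in_cell[OF assms(1,2)] closure_subset by auto
  then have "dist y (bary K) \<le> diameter K"
    using diameter_bounded_bound[OF bounded_closure[OF bounded_cell[OF assms(1,2)]] assms(3)]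
      diameter_closure[OF bounded_cell[OF assms(1,2)]] by simp
  also have "diameter K \<le> Max (diameter ` T h)"
    using finite_cells[OF assms(1)] assms(2) by (intro Max_ge) auto
  also have "\<dots> = h"
    using tessellations assms(1) by (simp add: mesh_def)
  finally show ?thesis by (simp add: dist_norm)
qed

lemma edge_cells: "(K, L) \<in> edges (T h) \<Longrightarrow> K \<in> T h \<and> L \<in> T h"
  by (simp add: edges_def)

lemma norm_bary_diff_le:
  assumes h: "h \<in> H" and KL: "(K, L) \<in> edges (T h)"
  shows "norm (bary L - bary K) \<le> 2 * h"
proof -
  have "face K L \<noteq> {}"
    using KL by (auto simp: edges_def)
  then obtain p where "p \<in> closure K" "p \<in> closure L" by (auto simp: face_def)
  then have "norm (p - bary K) \<le> h" "norm (p - bary L) \<le> h"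
    using norm_sub_bary_le[OF h] edge_cells[OF KL] by auto
  then show ?thesis
    using norm_triangle_ineq4[of "p - bary K" "p - bary L"] by (simp add: norm_minus_commute)
qed

lemma norm_sub_bary_edge_le:
  assumes h: "h \<in> H" and KL: "(K, L) \<in> edges (T h)" and x: "x \<in> closure K \<union> closure L"
  shows "norm (x - bary K) \<le> 3 * h"
proof (cases "x \<in> closure K")
  case True
  then show ?thesis using norm_sub_bary_le[OF h] edge_cells[OF KL] mesh_pos[OF h] by fastforce
next
  case False
  then have "norm (x - bary L) \<le> h" using x norm_sub_bary_le[OF h] edge_cells[OF KL] by auto
  then show ?thesis
    using norm_triangle_ineq[of "x - bary L" "bary L - bary K"] norm_bary_diff_le[OF h KL] by simp
qed

lemma measure_face_pos:
  assumes "h \<in> H" "(K, L) \<in> edges (T h)"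
  shows "0 < measure (hausdorff_measure (DIM('a) - 1)) (face K L)"
  using face_measures assms zeta_pos mesh_pos[OF assms(1)]
  by (fastforce intro: less_le_trans[of 0 "\<zeta> * h ^ (DIM('a) - 1)"])

lemma eventually_meshI:
  assumes "0 < h0" "\<And>h. h \<in> H \<Longrightarrow> h < h0 \<Longrightarrow> P h"
  shows "\<forall>\<^sub>F h in at 0 within H. P h"
  unfolding eventually_at using assms by (auto simp: dist_real_def)

lemma potential_increment_estimate:
  fixes V :: "'a \<Rightarrow> real"
  assumes V: "\<forall>x. V differentiable (at x)" "continuous_on UNIV (grad V)" and \<epsilon>: "0 < \<epsilon>"
  obtains h0 where "0 < h0"
    "\<And>h K L x. h \<in> H \<Longrightarrow> h < h0 \<Longrightarrow> (K, L) \<in> edges (T h) \<Longrightarrow> x \<in> closure K \<union> closure L \<Longrightarrow>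
       \<bar>V (bary L) - V (bary K) - grad V x \<bullet> (bary L - bary K)\<bar> \<le> \<epsilon> * h"
proof -
  have "compact (closure \<Omega>)" using bounded_domain by simp
  moreover have "0 < \<epsilon> / 2" using \<epsilon> by simp
  ultimately obtain \<delta> where \<delta>: "0 < \<delta>"
    "\<And>a b x. closed_segment a b \<subseteq> closure \<Omega> \<Longrightarrow> x \<in> closure \<Omega> \<Longrightarrow> dist a x \<le> \<delta> \<Longrightarrow> dist b a \<le> \<delta> \<Longrightarrow>
       \<bar>V b - V a - grad V x \<bullet> (b - a)\<bar> \<le> \<epsilon> / 2 * norm (b - a)"
    using uniform_first_order_estimate[of "closure \<Omega>" V] continuous_on_subset[OF V(2)] V(1) by blast
  have "\<bar>V (bary L) - V (bary K) - grad V x \<bullet> (bary L - bary K)\<bar> \<le> \<epsilon> * h"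
    if h: "h \<in> H" "h < \<delta> / 3" and KL: "(K, L) \<in> edges (T h)" and x: "x \<in> closure K \<union> closure L"
    for h K L x
  proof -
    have d: "norm (bary L - bary K) \<le> 2 * h" by (rule norm_bary_diff_le[OF h(1) KL])
    have "bary K \<in> \<Omega>" "bary L \<in> \<Omega>"
      using bary_in_cell[OF h(1)] cell_subset_domain[OF h(1)] edge_cells[OF KL] by auto
    then have "closed_segment (bary K) (bary L) \<subseteq> closure \<Omega>"
      using closed_segment_subset[OF _ _ convex_closure[OF convex_domain]] closure_subset by blast
    moreover have "x \<in> closure \<Omega>"
      using x closure_mono[OF cell_subset_domain[OF h(1)]] edge_cells[OF KL] by blast
    moreover have "dist (bary K) x \<le> \<delta>" "dist (bary L) (bary K) \<le> \<delta>"
      using norm_sub_bary_edge_le[OF h(1) KL x] d h(2) mesh_pos[OF h(1)]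
      by (simp_all add: dist_norm norm_minus_commute)
    ultimately have "\<bar>V (bary L) - V (bary K) - grad V x \<bullet> (bary L - bary K)\<bar>
        \<le> \<epsilon> / 2 * norm (bary L - bary K)" by (rule \<delta>(2))
    also have "\<dots> \<le> \<epsilon> * h" using d \<epsilon> by simp
    finally show ?thesis .
  qed
  moreover have "0 < \<delta> / 3" using \<delta>(1) by simp
  ultimately show thesis by (rule that[rotated])
qed

end

locale tessellated_densities = nondegenerate_tessellations \<Omega> H T \<zeta>
  for \<Omega> :: "'a::euclidean_space set" and H T \<zeta> +
  fixes \<rho> :: "real \<Rightarrow> 'a set \<Rightarrow> real" and C :: real
  assumes probabilities: "\<forall>h\<in>H. (\<forall>K\<in>T h. \<rho> h K \<ge> 0) \<and> (\<Sum>K\<in>T h. \<rho> h K) = 1"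
    and entropy_bounded:
      "\<forall>h\<in>H. set_lebesgue_integral lebesgue \<Omega> (\<lambda>x. phi_ent (rhohat (T h) (\<rho> h) x)) \<le> C"
begin

lemma mass_near_point_small:
  assumes \<eta>: "0 < \<eta>"
  obtains r where "0 < r"
    "\<And>h x. h \<in> H \<Longrightarrow> h \<le> r \<Longrightarrow> (\<Sum>M\<in>{M\<in>T h. norm (x - bary M) < r}. \<rho> h M) \<le> \<eta>"
proof -
  define Ce where "Ce = max C 0"
  define a where "a = 2 + 2 * Ce / \<eta>"
  have "0 \<le> 2 * Ce / \<eta>" using \<eta> by (simp add: Ce_def)
  then have a: "1 < a" by (simp add: a_def)
  have "Ce \<le> \<eta> / 2 * (a - 1)" using \<eta> by (simp add: a_def field_simps)
  then have aC: "Ce / (a - 1) \<le> \<eta> / 2" using a by (simp add: divide_le_eq)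
  have "0 \<le> exp a" "0 < \<eta> / 2" using \<eta> by simp_all
  then obtain s where s: "0 < s" "\<And>x::'a. exp a * measure lebesgue (ball x s) \<le> \<eta> / 2"
    using measure_ball_uniformly_small by blast
  have small: "(\<Sum>M\<in>{M\<in>T h. norm (x - bary M) < s / 2}. \<rho> h M) \<le> \<eta>"
    if h: "h \<in> H" "h \<le> s / 2" for h x
  proof -
    have "(\<Sum>M\<in>T h. measure lebesgue M * phi_ent (\<rho> h M / measure lebesgue M)) \<le> Ce"
      using sum_cell_entropy_le_integral[OF finite_cells[OF h(1)] bounded_domain open_domain]
        cell_subset_domain[OF h(1)] open_cell[OF h(1)] lmeasurable_cell[OF h(1)]
        disjoint_cells[OF h(1)] entropy_bounded h(1)
      by (fastforce simp: Ce_def intro: order_trans)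
    moreover have "M \<subseteq> ball x s" if "M \<in> {M\<in>T h. norm (x - bary M) < s / 2}" for M
    proof
      fix y assume "y \<in> M"
      then have "norm (y - bary M) \<le> h"
        using norm_sub_bary_le[OF h(1)] that closure_subset by blast
      then show "y \<in> ball x s"
        using that h(2) norm_triangle_ineq4[of "x - bary M" "y - bary M"] by (simp add: dist_norm)
    qed
    ultimately have "(\<Sum>M\<in>{M\<in>T h. norm (x - bary M) < s / 2}. \<rho> h M)
        \<le> exp a * measure lebesgue (ball x s) + Ce / (a - 1)"
      using probabilities h(1) lmeasurable_cell[OF h(1)] measure_cell_pos[OF h(1)]
      by (intro mass_le_entropy_bound[OF finite_cells[OF h(1)] _ disjoint_cells[OF h(1)] _ _ _ a]) auto
    then show ?thesis using s(2)[of x] aC by linarith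
  qed
  show thesis
    by (rule that[of "s / 2"]) (use s(1) small in auto)
qed

end

section \<open>Flux estimates\<close>

locale flux_setting = tessellated_densities \<Omega> H T \<zeta> \<rho> C + pointy_kernel W LW
  for \<Omega> :: "'a::euclidean_space set" and H T \<zeta> \<rho> C and W :: "'a \<Rightarrow> real" and LW
begin

lemma cell_regularity:
  assumes "h \<in> H" "M \<in> T h"
  shows "M \<in> lmeasurable \<and> 0 < measure lebesgue M \<and> (\<forall>y\<in>M. norm (y - bary M) \<le> h)"
  using lmeasurable_cell[OF assms] measure_cell_pos[OF assms] norm_sub_bary_le[OF assms] closure_subset
  by blast

lemma interaction_edge_estimate:
  assumes h: "h \<in> H" and KL: "(K, L) \<in> edges (T h)" and x: "x \<in> closure K \<union> closure L"
    and h\<delta>: "4 * h \<le> \<delta>" and e: "0 \<le> e"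
    and far: "\<And>z u w. r \<le> norm z \<Longrightarrow> norm z \<le> diameter \<Omega> \<Longrightarrow> norm u \<le> \<delta> \<Longrightarrow> norm w \<le> \<delta> \<Longrightarrow>
                \<bar>W (z + u) - W z - grad W (z + w) \<bullet> u\<bar> \<le> e * norm u"
  shows "\<bar>(\<Sum>M\<in>T h. \<rho> h M * (W (bary L - bary M) - W (bary K - bary M)))
           - (\<Sum>M\<in>T h. (\<rho> h M / measure lebesgue M) *\<^sub>R cell_grad M x) \<bullet> (bary L - bary K)\<bar>
         \<le> e * norm (bary L - bary K)
           + (LW + grad_bound) * norm (bary L - bary K) * (\<Sum>M\<in>{M\<in>T h. norm (bary K - bary M) < r}. \<rho> h M)"
proof (rule interaction_estimate[OF finite_cells[OF h] cell_regularity[OF h] _ _ norm_bary_diff_le[OF h KL]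
      norm_sub_bary_edge_le[OF h KL x] h\<delta> _ e far])
  show "0 \<le> \<rho> h M" if "M \<in> T h" for M using probabilities h that by auto
  show "(\<Sum>M\<in>T h. \<rho> h M) = 1" using probabilities h by auto
  show "norm (bary K - bary M) \<le> diameter \<Omega>" if "M \<in> T h" for M
    using diameter_bounded_bound[OF bounded_domain, of "bary K" "bary M"] that edge_cells[OF KL]
      bary_in_cell[OF h] cell_subset_domain[OF h] by (auto simp: dist_norm)
qed

lemma interaction_increment_estimate:
  assumes \<epsilon>: "0 < \<epsilon>"
  obtains h0 where "0 < h0"
    "\<And>h K L x. h \<in> H \<Longrightarrow> h < h0 \<Longrightarrow> (K, L) \<in> edges (T h) \<Longrightarrow> x \<in> closure K \<union> closure L \<Longrightarrow>
       \<bar>(\<Sum>M\<in>T h. \<rho> h M * (W (bary L - bary M) - W (bary K - bary M)))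
         - (\<Sum>M\<in>T h. (\<rho> h M / measure lebesgue M) *\<^sub>R cell_grad M x) \<bullet> (bary L - bary K)\<bar>
       \<le> \<epsilon> * h"
proof -
  define \<Lambda> where "\<Lambda> = LW + grad_bound + 1"
  have \<Lambda>: "0 < \<Lambda>" using lipschitz_constant_nonneg grad_bound_nonneg by (simp add: \<Lambda>_def)
  then have "0 < \<epsilon> / (4 * \<Lambda>)" using \<epsilon> by simp
  then obtain r where r: "0 < r"
    "\<And>h x. h \<in> H \<Longrightarrow> h \<le> r \<Longrightarrow> (\<Sum>M\<in>{M\<in>T h. norm (x - bary M) < r}. \<rho> h M) \<le> \<epsilon> / (4 * \<Lambda>)"
    using mass_near_point_small by blast
  have "0 < \<epsilon> / 4" using \<epsilon> by simp
  then obtain \<delta> where \<delta>: "0 < \<delta>" "\<And>z u w. r \<le> norm z \<Longrightarrow> norm z \<le> diameter \<Omega> \<Longrightarrow> norm u \<le> \<delta> \<Longrightarrow>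
      norm w \<le> \<delta> \<Longrightarrow> \<bar>W (z + u) - W z - grad W (z + w) \<bullet> u\<bar> \<le> \<epsilon> / 4 * norm u"
    using W_first_order_off_origin[OF r(1), where R = "diameter \<Omega>"] by blast
  have "\<bar>(\<Sum>M\<in>T h. \<rho> h M * (W (bary L - bary M) - W (bary K - bary M)))
         - (\<Sum>M\<in>T h. (\<rho> h M / measure lebesgue M) *\<^sub>R cell_grad M x) \<bullet> (bary L - bary K)\<bar> \<le> \<epsilon> * h"
    if h: "h \<in> H" "h < min r (\<delta> / 4)" and KL: "(K, L) \<in> edges (T h)" and x: "x \<in> closure K \<union> closure L"
    for h K L x
  proof -
    let ?d = "bary L - bary K" and ?N = "\<Sum>M\<in>{M\<in>T h. norm (bary K - bary M) < r}. \<rho> h M"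
    have N: "0 \<le> ?N" using probabilities h(1) by (auto intro: sum_nonneg)
    have "\<bar>(\<Sum>M\<in>T h. \<rho> h M * (W (bary L - bary M) - W (bary K - bary M)))
           - (\<Sum>M\<in>T h. (\<rho> h M / measure lebesgue M) *\<^sub>R cell_grad M x) \<bullet> ?d\<bar>
        \<le> \<epsilon> / 4 * norm ?d + (LW + grad_bound) * norm ?d * ?N"
      using h(2) \<epsilon> by (intro interaction_edge_estimate[OF h(1) KL x _ _ \<delta>(2)]) auto
    also have "\<dots> \<le> \<epsilon> / 4 * (2 * h) + \<Lambda> * (2 * h) * (\<epsilon> / (4 * \<Lambda>))"
      using N norm_bary_diff_le[OF h(1) KL] r(2)[OF h(1), of "bary K"] h(2) \<epsilon> \<Lambda> mesh_pos[OF h(1)]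
        lipschitz_constant_nonneg grad_bound_nonneg
      by (intro add_mono mult_mono) (auto simp: \<Lambda>_def)
    also have "\<dots> = \<epsilon> * h" using \<Lambda> by (simp add: field_simps)
    finally show ?thesis .
  qed
  moreover have "0 < min r (\<delta> / 4)" using r(1) \<delta>(1) by simp
  ultimately show thesis by (rule that[rotated])
qed

lemma grad_Qpot_cells:
  assumes V: "\<forall>x. V differentiable (at x)" and h: "h \<in> H"
  shows "grad (Qpot V W (rhohat (T h) (\<rho> h))) x
           = grad V x + (\<Sum>M\<in>T h. (\<rho> h M / measure lebesgue M) *\<^sub>R cell_grad M x)"
  using grad_Qpot_rhohat[of "T h"] finite_cells[OF h] lmeasurable_cell[OF h] bounded_cell[OF h] V
  by blast

lemma continuous_on_grad_Qpot_cells: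
  assumes V: "\<forall>x. V differentiable (at x)" "continuous_on UNIV (grad V)" and h: "h \<in> H"
  shows "continuous_on UNIV (grad (Qpot V W (rhohat (T h) (\<rho> h))))"
  using continuous_on_grad_Qpot_rhohat[of "T h" V] finite_cells[OF h] lmeasurable_cell[OF h]
    bounded_cell[OF h] V by blast

lemma flux_pointwise_estimate:
  fixes V :: "'a \<Rightarrow> real"
  assumes V: "\<forall>x. V differentiable (at x)" "continuous_on UNIV (grad V)" and \<epsilon>: "0 < \<epsilon>"
  shows "\<forall>\<^sub>F h in at 0 within H. h \<in> H \<and> (\<forall>(K, L)\<in>edges (T h). \<forall>x\<in>closure K \<union> closure L.
           \<bar>qKL V W (T h) (\<rho> h) K L - grad (Qpot V W (rhohat (T h) (\<rho> h))) x \<bullet> (bary L - bary K)\<bar>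
             \<le> \<epsilon> * h)"
proof -
  have \<epsilon>2: "0 < \<epsilon> / 2" using \<epsilon> by simp
  obtain h1 where h1: "0 < h1"
    "\<And>h K L x. h \<in> H \<Longrightarrow> h < h1 \<Longrightarrow> (K, L) \<in> edges (T h) \<Longrightarrow> x \<in> closure K \<union> closure L \<Longrightarrow>
       \<bar>V (bary L) - V (bary K) - grad V x \<bullet> (bary L - bary K)\<bar> \<le> \<epsilon> / 2 * h"
    using potential_increment_estimate[OF V \<epsilon>2] by blast
  obtain h2 where h2: "0 < h2"
    "\<And>h K L x. h \<in> H \<Longrightarrow> h < h2 \<Longrightarrow> (K, L) \<in> edges (T h) \<Longrightarrow> x \<in> closure K \<union> closure L \<Longrightarrow>
       \<bar>(\<Sum>M\<in>T h. \<rho> h M * (W (bary L - bary M) - W (bary K - bary M)))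
         - (\<Sum>M\<in>T h. (\<rho> h M / measure lebesgue M) *\<^sub>R cell_grad M x) \<bullet> (bary L - bary K)\<bar>
       \<le> \<epsilon> / 2 * h"
    using interaction_increment_estimate[OF \<epsilon>2] by blast
  have "\<bar>qKL V W (T h) (\<rho> h) K L - grad (Qpot V W (rhohat (T h) (\<rho> h))) x \<bullet> (bary L - bary K)\<bar>
      \<le> \<epsilon> * h"
    if h: "h \<in> H" "h < min h1 h2" and KL: "(K, L) \<in> edges (T h)" and x: "x \<in> closure K \<union> closure L"
    for h K L x
  proof -
    have "h < h1" "h < h2" using h(2) by auto
    with h1(2)[OF h(1) _ KL x] h2(2)[OF h(1) _ KL x] show ?thesis
      unfolding grad_Qpot_cells[OF V(1) h(1)] inner_add_left qKL_def by linarith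
  qed
  with h1(1) h2(1) show ?thesis
    by (intro eventually_meshI[of "min h1 h2"]) auto
qed

lemma flux_cells_estimate:
  fixes V :: "'a \<Rightarrow> real"
  assumes V: "\<forall>x. V differentiable (at x)" "continuous_on UNIV (grad V)" and \<epsilon>: "0 < \<epsilon>"
  shows "\<forall>\<^sub>F h in at 0 within H. \<forall>(K, L)\<in>edges (T h). \<forall>x\<in>K \<union> L.
           \<bar>qKL V W (T h) (\<rho> h) K L - grad (Qpot V W (rhohat (T h) (\<rho> h))) x \<bullet> (bary L - bary K)\<bar>
             \<le> \<epsilon> * h"
  using flux_pointwise_estimate[OF V \<epsilon>] by (rule eventually_mono) (use closure_subset in fast)

lemma flux_average_estimate:
  fixes V :: "'a \<Rightarrow> real"
  assumes V: "\<forall>x. V differentiable (at x)" "continuous_on UNIV (grad V)"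
    and h: "h \<in> H" and KL: "(K, L) \<in> edges (T h)"
    and A: "A \<subseteq> closure K \<union> closure L" "A \<in> sets \<mu>" "0 < measure \<mu> A"
    and meas: "grad (Qpot V W (rhohat (T h) (\<rho> h))) \<in> borel_measurable \<mu>"
    and pointwise: "\<forall>(K, L)\<in>edges (T h). \<forall>x\<in>closure K \<union> closure L.
      \<bar>qKL V W (T h) (\<rho> h) K L - grad (Qpot V W (rhohat (T h) (\<rho> h))) x \<bullet> (bary L - bary K)\<bar> \<le> B"
  shows "\<bar>qKL V W (T h) (\<rho> h) K L
           - ((1 / measure \<mu> A) *\<^sub>R set_lebesgue_integral \<mu> A (grad (Qpot V W (rhohat (T h) (\<rho> h)))))
             \<bullet> (bary L - bary K)\<bar> \<le> B"
proof (rule average_inner_estimate_continuous[OF continuous_on_grad_Qpot_cells[OF V h] _ A meas])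
  show "compact (closure K \<union> closure L)"
    using bounded_cell[OF h] edge_cells[OF KL] by (simp add: compact_Un)
qed (use pointwise KL in blast)

lemma flux_cell_average_estimate:
  fixes V :: "'a \<Rightarrow> real"
  assumes V: "\<forall>x. V differentiable (at x)" "continuous_on UNIV (grad V)" and \<epsilon>: "0 < \<epsilon>"
  shows "\<forall>\<^sub>F h in at 0 within H. \<forall>(K, L)\<in>edges (T h).
           \<bar>qKL V W (T h) (\<rho> h) K L
             - ((1 / measure lebesgue K) *\<^sub>R
                  set_lebesgue_integral lebesgue K (grad (Qpot V W (rhohat (T h) (\<rho> h)))))
               \<bullet> (bary L - bary K)\<bar> \<le> \<epsilon> * h"
  using flux_pointwise_estimate[OF V \<epsilon>]
proof (rule eventually_mono, intro ballI, clarify)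
  fix h K L assume h: "h \<in> H" and KL: "(K, L) \<in> edges (T h)"
  then have K: "K \<in> T h" by (simp add: edges_def)
  have "grad (Qpot V W (rhohat (T h) (\<rho> h))) \<in> borel_measurable lebesgue"
    using continuous_on_grad_Qpot_cells[OF V h]
    by (intro borel_measurable_lebesgue_of_borel borel_measurable_continuous_onI)
  moreover assume "\<forall>(K, L)\<in>edges (T h). \<forall>x\<in>closure K \<union> closure L.
    \<bar>qKL V W (T h) (\<rho> h) K L - grad (Qpot V W (rhohat (T h) (\<rho> h))) x \<bullet> (bary L - bary K)\<bar> \<le> \<epsilon> * h"
  ultimately show "\<bar>qKL V W (T h) (\<rho> h) K L
      - ((1 / measure lebesgue K) *\<^sub>R
           set_lebesgue_integral lebesgue K (grad (Qpot V W (rhohat (T h) (\<rho> h)))))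
        \<bullet> (bary L - bary K)\<bar> \<le> \<epsilon> * h"
    using closure_subset lmeasurable_cell[OF h K] measure_cell_pos[OF h K]
    by (intro flux_average_estimate[OF V h KL]) auto
qed

lemma flux_face_average_estimate:
  fixes V :: "'a \<Rightarrow> real"
  assumes V: "\<forall>x. V differentiable (at x)" "continuous_on UNIV (grad V)" and \<epsilon>: "0 < \<epsilon>"
  shows "\<forall>\<^sub>F h in at 0 within H. \<forall>(K, L)\<in>edges (T h).
           \<bar>qKL V W (T h) (\<rho> h) K L
             - ((1 / measure (hausdorff_measure (DIM('a) - 1)) (face K L)) *\<^sub>R
                  set_lebesgue_integral (hausdorff_measure (DIM('a) - 1)) (face K L)
                    (grad (Qpot V W (rhohat (T h) (\<rho> h)))))
               \<bullet> (bary L - bary K)\<bar> \<le> \<epsilon> * h"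
  using flux_pointwise_estimate[OF V \<epsilon>]
proof (rule eventually_mono, intro ballI, clarify)
  fix h K L assume h: "h \<in> H" and KL: "(K, L) \<in> edges (T h)"
  have "grad (Qpot V W (rhohat (T h) (\<rho> h))) \<in> borel_measurable (hausdorff_measure (DIM('a) - 1))"
    using borel_measurable_continuous_onI[OF continuous_on_grad_Qpot_cells[OF V h]]
    by (simp cong: measurable_cong_sets)
  moreover have "face K L \<in> sets (hausdorff_measure (DIM('a) - 1))"
    by (simp add: face_def closed_Int)
  moreover assume "\<forall>(K, L)\<in>edges (T h). \<forall>x\<in>closure K \<union> closure L.
    \<bar>qKL V W (T h) (\<rho> h) K L - grad (Qpot V W (rhohat (T h) (\<rho> h))) x \<bullet> (bary L - bary K)\<bar> \<le> \<epsilon> * h"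
  ultimately show "\<bar>qKL V W (T h) (\<rho> h) K L
      - ((1 / measure (hausdorff_measure (DIM('a) - 1)) (face K L)) *\<^sub>R
           set_lebesgue_integral (hausdorff_measure (DIM('a) - 1)) (face K L)
             (grad (Qpot V W (rhohat (T h) (\<rho> h)))))
        \<bullet> (bary L - bary K)\<bar> \<le> \<epsilon> * h"
    using measure_face_pos[OF h KL]
    by (intro flux_average_estimate[OF V h KL]) (auto simp: face_def)
qed

end

theorem lemma4p11:
  fixes \<Omega> :: "'a::euclidean_space set"
    and H :: "real set"
    and T :: "real \<Rightarrow> 'a set set"
    and \<rho> :: "real \<Rightarrow> 'a set \<Rightarrow> real"
    and g :: "'a \<Rightarrow> real"
    and V W :: "'a \<Rightarrow> real"
    and \<zeta> LV LW :: real
  assumes \<Omega>: "open \<Omega>" "bounded \<Omega>" "convex \<Omega>"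
    and H: "H \<subseteq> {0<..}"
    and tess: "\<forall>h\<in>H. tessellation \<Omega> (T h) \<and> mesh (T h) = h"
    and nondeg: "0 < \<zeta>" "\<zeta> < 1"
      "\<forall>h\<in>H. \<forall>K\<in>T h. ball (bary K) (\<zeta> * h) \<subseteq> K"
      "\<forall>h\<in>H. \<forall>(K, L)\<in>edges (T h).
          measure (hausdorff_measure (DIM('a) - 1)) (face K L) \<ge> \<zeta> * h ^ (DIM('a) - 1)"
    and orth: "\<forall>h\<in>H. \<forall>(K, L)\<in>edges (T h). \<forall>y\<in>face K L. \<forall>z\<in>face K L.
          (y - z) \<bullet> (bary L - bary K) = 0"
    and V: "LV-lipschitz_on UNIV V" "\<forall>x. V differentiable (at x)"
      "continuous_on UNIV (grad V)" "bdd_below (range V)"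
    and W: "\<forall>x. W x \<ge> 0" "\<forall>x. W x = W (- x)" "LW-lipschitz_on UNIV W"
      "\<forall>x. x \<noteq> 0 \<longrightarrow> W differentiable (at x)" "continuous_on (- {0}) (grad W)"
    and prob: "\<forall>h\<in>H. (\<forall>K\<in>T h. \<rho> h K \<ge> 0) \<and> (\<Sum>K\<in>T h. \<rho> h K) = 1"
    and g: "set_integrable lebesgue \<Omega> g"
    and L1conv: "((\<lambda>h. set_lebesgue_integral lebesgue \<Omega> (\<lambda>x. \<bar>rhohat (T h) (\<rho> h) x - g x\<bar>))
                  \<longlongrightarrow> 0) (at 0 within H)"
    and entropy: "\<exists>C. \<forall>h\<in>H. set_lebesgue_integral lebesgue \<Omega> (\<lambda>x. phi_ent (rhohat (T h) (\<rho> h) x)) \<le> C"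
  shows
    "(\<forall>\<epsilon>>0. \<forall>\<^sub>F h in at 0 within H. \<forall>(K, L)\<in>edges (T h). \<forall>x\<in>K \<union> L.
        \<bar>qKL V W (T h) (\<rho> h) K L
          - grad (Qpot V W (rhohat (T h) (\<rho> h))) x \<bullet> (bary L - bary K)\<bar> \<le> \<epsilon> * h)
   \<and> (\<forall>\<epsilon>>0. \<forall>\<^sub>F h in at 0 within H. \<forall>(K, L)\<in>edges (T h).
        \<bar>qKL V W (T h) (\<rho> h) K L
          - ((1 / measure lebesgue K) *\<^sub>R
               set_lebesgue_integral lebesgue K (grad (Qpot V W (rhohat (T h) (\<rho> h)))))
             \<bullet> (bary L - bary K)\<bar> \<le> \<epsilon> * h)
   \<and> (\<forall>\<epsilon>>0. \<forall>\<^sub>F h in at 0 within H. \<forall>(K, L)\<in>edges (T h).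
        \<bar>qKL V W (T h) (\<rho> h) K L
          - ((1 / measure (hausdorff_measure (DIM('a) - 1)) (face K L)) *\<^sub>R
               set_lebesgue_integral (hausdorff_measure (DIM('a) - 1)) (face K L)
                 (grad (Qpot V W (rhohat (T h) (\<rho> h)))))
             \<bullet> (bary L - bary K)\<bar> \<le> \<epsilon> * h)"
proof -
  obtain C where C: "\<forall>h\<in>H. set_lebesgue_integral lebesgue \<Omega> (\<lambda>x. phi_ent (rhohat (T h) (\<rho> h) x)) \<le> C"
    using entropy by blast
  interpret flux_setting \<Omega> H T \<zeta> \<rho> C W LW
    using \<Omega> H tess nondeg(1,3,4) prob C W(3-5) by unfold_locales auto
  show ?thesis
    using flux_cells_estimate[OF V(2,3)] flux_cell_average_estimate[OF V(2,3)]
      flux_face_average_estimate[OF V(2,3)] by blast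
qed

end
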